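(* Let $G$ be a bridgeless cubic graph with at least one $2$-edge-cut and let $(T,\varphi)$ be a cactus representation of all $2$-edge-cuts of $G$ (as described in the context). Let $\{e_1,e_2\}$ be a $2$-edge-cut of $G$ and let $\{a,b\}$ be the corresponding $2$-edge-cut of $T$. Perform the $\{e_1,e_2\}$-reduction in $G$, obtaining graphs $G_1$ and $G_2$ with new edges $e_1'\in E(G_1)$ and $e_2'\in E(G_2)$. Perform the $\{a,b\}$-reduction in $T$, obtaining graphs $T_1$ and $T_2$ (with $T_i$ the part corresponding to $G_i$), and delete any loop thereby created in $T_1$ or $T_2$. Then $(T_1,\varphi|_{V(G_1)})$ and $(T_2,\varphi|_{V(G_2)})$ are cactus representations of all $2$-edge-cuts of $G_1$ and $G_2$, respectively.
   Context: Graphs may have parallel edges; cubic means every vertex has degree $3$; bridgeless means no edge whose removal disconnects more components. A $2$-edge-cut is an inclusion-minimal edge cut of size $2$; in a bridgeless graph with a $2$-edge-cut the minimum edge cuts are exactly the $2$-edge-cuts. A cactus is a connected graph in which each edge lies on at most one cycle ($2$-cycles allowed, no loops). For a connected graph $G$, a cactus representation is a pair $(T,\varphi)$ with $T$ a cactus and $\varphi:V(G)\to V(T)$ such that (1) for every minimum cut $\{S,V(T)\setminus S\}$ of $T$, the partition $X=\{u:\varphi(u)\in S\}$, $V(G)\setminus X$ is a minimum cut of $G$, and (2) every minimum cut $\{X,V(G)\setminus X\}$ of $G$ arises in this way from some minimum cut of $T$. The cactus representation of all $2$-edge-cuts used here is the one obtained by contracting each $3$-edge-connected component of $G$ (a maximal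 vertex set $X$ with at least $3$ edge-disjoint paths... i.e. local edge-connectivity $\lambda(u,v)\ge 3$ for all $u,v\in X$) to a single node: $\varphi$ maps each vertex to the node of its $3$-edge-connected component, each edge $uv$ of $G$ with $\varphi(u)\neq\varphi(v)$ (an external edge) corresponds to an edge of $T$ joining $\varphi(u)$ and $\varphi(v)$, and two distinct external edges form a $2$-edge-cut of $G$ if and only if their corresponding edges of $T$ lie on a common cycle of $T$; the $2$-edge-cut $\{a,b\}$ of $T$ corresponding to $\{e_1,e_2\}$ consists of the edges corresponding to $e_1,e_2$. For a $2$-edge-cut $\{f_1,f_2\}$ of a graph $H$, $f_1=x_1y_1$, $f_2=x_2y_2$ with $x_1,x_2$ in one component $A$ of $H-\{f_1,f_2\}$ and $y_1,y_2$ in the other component $B$, the $\{f_1,f_2\}$-reduction replaces $f_1,f_2$ by new edges $x_1x_2$ (in $A$) and $y_1y_2$ (in $B$), giving the two graphs $A+x_1x_2$ and $B+y_1y_2$ (the new edge may be a loop in the cactus case when $x_1=x_2$ or $y_1=y_2$). *)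

theory Defs
  imports Main
begin

text \<open>A graph has a vertex set, an edge set, and for each edge the set of its
  end vertices (one vertex for a loop, two for an ordinary edge).\<close>

record ('v, 'e) mgraph =
  verts :: "'v set"
  edges :: "'e set"
  ends  :: "'e \<Rightarrow> 'v set"

definition wf_graph :: "('v, 'e) mgraph \<Rightarrow> bool" where
  "wf_graph G \<longleftrightarrow> finite (verts G) \<and> finite (edges G) \<and>
     (\<forall>e \<in> edges G. ends G e \<subseteq> verts G \<and> ends G e \<noteq> {} \<and> card (ends G e) \<le> 2)"

definition del_edges :: "('v, 'e) mgraph \<Rightarrow> 'e set \<Rightarrow> ('v, 'e) mgraph" where
  "del_edges G F = G\<lparr>edges := edges G - F\<rparr>"

text \<open>Degree: a loop counts twice.\<close>
definition degree :: "('v, 'e) mgraph \<Rightarrow> 'v \<Rightarrow> nat" where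
  "degree G v = card {e \<in> edges G. v \<in> ends G e \<and> card (ends G e) = 2}
              + 2 * card {e \<in> edges G. ends G e = {v}}"

definition cubic :: "('v, 'e) mgraph \<Rightarrow> bool" where
  "cubic G \<longleftrightarrow> (\<forall>v \<in> verts G. degree G v = 3)"

inductive walk :: "('v, 'e) mgraph \<Rightarrow> 'v \<Rightarrow> 'e list \<Rightarrow> 'v \<Rightarrow> bool" for G where
  walk_nil:  "u \<in> verts G \<Longrightarrow> walk G u [] u"
| walk_cons: "e \<in> edges G \<Longrightarrow> ends G e = {u, x} \<Longrightarrow> walk G x es w \<Longrightarrow> walk G u (e # es) w"

definition reachable :: "('v, 'e) mgraph \<Rightarrow> 'v \<Rightarrow> 'v \<Rightarrow> bool" where
  "reachable G u v \<longleftrightarrow> (\<exists>es. walk G u es v)"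

definition connected :: "('v, 'e) mgraph \<Rightarrow> bool" where
  "connected G \<longleftrightarrow> verts G \<noteq> {} \<and> (\<forall>u \<in> verts G. \<forall>v \<in> verts G. reachable G u v)"

definition components :: "('v, 'e) mgraph \<Rightarrow> 'v set set" where
  "components G = {{v \<in> verts G. reachable G u v} | u. u \<in> verts G}"

definition edge_cut :: "('v, 'e) mgraph \<Rightarrow> 'e set \<Rightarrow> bool" where
  "edge_cut G F \<longleftrightarrow> F \<subseteq> edges G \<and>
     (\<exists>u \<in> verts G. \<exists>v \<in> verts G. reachable G u v \<and> \<not> reachable (del_edges G F) u v)"

definition two_edge_cut :: "('v, 'e) mgraph \<Rightarrow> 'e set \<Rightarrow> bool" where
  "two_edge_cut G F \<longleftrightarrow> card F = 2 \<and> edge_cut G F \<and> (\<forall>F' \<subset> F. \<not> edge_cut G F')"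

definition bridgeless :: "('v, 'e) mgraph \<Rightarrow> bool" where
  "bridgeless G \<longleftrightarrow> (\<forall>e \<in> edges G. \<not> edge_cut G {e})"

text \<open>Local edge-connectivity at least k: k pairwise edge-disjoint u-v walks
  (equivalently, k edge-disjoint u-v paths).\<close>
definition lambda_ge :: "('v, 'e) mgraph \<Rightarrow> nat \<Rightarrow> 'v \<Rightarrow> 'v \<Rightarrow> bool" where
  "lambda_ge G k u v \<longleftrightarrow> (\<exists>Ps. length Ps = k \<and> (\<forall>P \<in> set Ps. walk G u P v) \<and>
     (\<forall>i < k. \<forall>j < k. i \<noteq> j \<longrightarrow> set (Ps ! i) \<inter> set (Ps ! j) = {}))"

text \<open>Cycles (given as edge lists; 2-cycles of parallel edges allowed).\<close>
definition is_cycle :: "('v, 'e) mgraph \<Rightarrow> 'e list \<Rightarrow> bool" where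
  "is_cycle G es \<longleftrightarrow> es \<noteq> [] \<and> distinct es \<and>
     (\<exists>vs. length vs = length es + 1 \<and>
        (\<forall>i < length es. es ! i \<in> edges G \<and> ends G (es ! i) = {vs ! i, vs ! Suc i}) \<and>
        hd vs = last vs \<and> distinct (tl vs))"

definition on_common_cycle :: "('v, 'e) mgraph \<Rightarrow> 'e \<Rightarrow> 'e \<Rightarrow> bool" where
  "on_common_cycle G a b \<longleftrightarrow> (\<exists>es. is_cycle G es \<and> a \<in> set es \<and> b \<in> set es)"

definition cactus :: "('v, 'e) mgraph \<Rightarrow> bool" where
  "cactus T \<longleftrightarrow> wf_graph T \<and> connected T \<and> (\<forall>e \<in> edges T. card (ends T e) = 2) \<and>
     (\<forall>e es1 es2. is_cycle T es1 \<and> is_cycle T es2 \<and> e \<in> set es1 \<and> e \<in> set es2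
        \<longrightarrow> set es1 = set es2)"

definition external_edges :: "('v, 'e) mgraph \<Rightarrow> ('v \<Rightarrow> 'n) \<Rightarrow> 'e set" where
  "external_edges G \<phi> = {e \<in> edges G. card (\<phi> ` ends G e) = 2}"

text \<open>The cactus representation of all 2-edge-cuts of G obtained by contracting each
  3-edge-connected component of G to a node: phi maps each vertex to the node of its
  3-edge-connected component, psi maps external edges bijectively to the edges of T
  (respecting ends), and two distinct external edges form a 2-edge-cut of G iff
  their images lie on a common cycle of T.\<close>
definition cactus_rep_2cuts ::
  "('v, 'e) mgraph \<Rightarrow> ('n, 'f) mgraph \<Rightarrow> ('v \<Rightarrow> 'n) \<Rightarrow> ('e \<Rightarrow> 'f) \<Rightarrow> bool" where
  "cactus_rep_2cuts G T \<phi> \<psi> \<longleftrightarrow>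
     cactus T \<and>
     \<phi> ` verts G = verts T \<and>
     (\<forall>u \<in> verts G. \<forall>v \<in> verts G. \<phi> u = \<phi> v \<longleftrightarrow> lambda_ge G 3 u v) \<and>
     bij_betw \<psi> (external_edges G \<phi>) (edges T) \<and>
     (\<forall>e \<in> external_edges G \<phi>. ends T (\<psi> e) = \<phi> ` ends G e) \<and>
     (\<forall>e1 \<in> external_edges G \<phi>. \<forall>e2 \<in> external_edges G \<phi>. e1 \<noteq> e2 \<longrightarrow>
        (two_edge_cut G {e1, e2} \<longleftrightarrow> on_common_cycle T (\<psi> e1) (\<psi> e2)))"

text \<open>The side S of the {f1,f2}-reduction: keep the vertices of S, the edges inside S,
  and add the new edge f' joining the ends of f1, f2 lying in S (a loop if these coincide).\<close>
definition reduce :: "('v, 'e) mgraph \<Rightarrow> 'e \<Rightarrow> 'e \<Rightarrow> 'v set \<Rightarrow> 'e \<Rightarrow> ('v, 'e) mgraph" where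
  "reduce H f1 f2 S f' =
     \<lparr>verts = S,
      edges = {e \<in> edges H - {f1, f2}. ends H e \<subseteq> S} \<union> {f'},
      ends = (ends H)(f' := (ends H f1 \<union> ends H f2) \<inter> S)\<rparr>"

definition reduce_noloop :: "('v, 'e) mgraph \<Rightarrow> 'e \<Rightarrow> 'e \<Rightarrow> 'v set \<Rightarrow> 'e \<Rightarrow> ('v, 'e) mgraph" where
  "reduce_noloop H f1 f2 S f' =
     (if card ((ends H f1 \<union> ends H f2) \<inter> S) = 1
      then \<lparr>verts = S, edges = {e \<in> edges H - {f1, f2}. ends H e \<subseteq> S}, ends = ends H\<rparr>
      else reduce H f1 f2 S f')"

definition side_of :: "('v, 'e) mgraph \<Rightarrow> 'e set \<Rightarrow> 'v set \<Rightarrow> 'v set" where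
  "side_of H F S = {t \<in> verts H. \<exists>s \<in> S. reachable (del_edges H F) s t}"

end

theory Submission
  imports Defs
begin

(* Let A and B be the two sides of the 2-edge-cut {e1, e2} of G. Three edge-disjoint walks
   cannot all cross a 2-edge-cut, so phi separates A from B; hence every edge of T other than
   a = psi e1 and b = psi e2 stays on one side of the cut {a, b} of T, and T1 is the A-side of T
   plus an edge t' joining the A-ends of a and b (dropped when these coincide).

   Walks of G between vertices of A project to walks of G1, a detour through B being replaced
   by the new edge e', and walks of G1 lift back to G; both operations keep edge-disjoint walks
   edge-disjoint. So G1 inherits connectivity, bridgelessness, 3-edge-connectivity inside A and
   the 2-edge-cuts of G (with e' in the role of e1).

   A cycle of T through a must also use b and consists of an arc in the A-side and an arc in the
   B-side; trading the B-arc for t' and back matches the cycles of T1 through t' with the cycles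
   of T through a. This makes T1 a cactus whose cycles mirror those of T. The other side of the
   cut is the same construction with A and B exchanged. *)

lemma wf_graph_del_edges: "wf_graph G \<Longrightarrow> wf_graph (del_edges G F)"
  by (auto simp: wf_graph_def del_edges_def)

lemma del_edges_simps [simp]:
  "verts (del_edges G F) = verts G" "edges (del_edges G F) = edges G - F"
  "ends (del_edges G F) = ends G"
  by (auto simp: del_edges_def)

lemma del_edges_empty [simp]: "del_edges G {} = G"
  by (simp add: del_edges_def)

lemma del_edges_del_edges [simp]: "del_edges (del_edges G F) F' = del_edges G (F \<union> F')"
  by (auto simp: del_edges_def Diff_eq Int_assoc)

lemma wf_graph_ends:
  assumes "wf_graph G" "e \<in> edges G"
  shows "ends G e \<subseteq> verts G" "ends G e \<noteq> {}" "card (ends G e) \<le> 2"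
  using assms by (auto simp: wf_graph_def)

lemma ends_eq_doubleton:
  assumes "wf_graph G" "e \<in> edges G" "u \<in> ends G e"
  obtains w where "ends G e = {u, w}"
proof (cases "ends G e = {u}")
  case False
  then obtain w where w: "w \<in> ends G e" "w \<noteq> u" using assms(3) by auto
  have "finite (ends G e)"
    using assms(1,2) finite_subset[of "ends G e" "verts G"] by (simp add: wf_graph_def)
  moreover have "card {u, w} = 2" using w(2) by simp
  ultimately have "{u, w} = ends G e"
    using card_seteq[of "ends G e" "{u, w}"] w(1) assms(3) wf_graph_ends(3)[OF assms(1,2)] by auto
  then show ?thesis by (intro that[of w]) simp
qed (rule that[of u], simp)

lemma walk_end_in_verts: "walk G u es v \<Longrightarrow> v \<in> verts G"
  by (induction rule: walk.induct) auto

lemma walk_start_in_verts: "walk G u es v \<Longrightarrow> wf_graph G \<Longrightarrow> u \<in> verts G"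
  by (induction rule: walk.induct) (auto simp: wf_graph_def)

lemma walk_append: "walk G u es v \<Longrightarrow> walk G v fs w \<Longrightarrow> walk G u (es @ fs) w"
  by (induction rule: walk.induct) (auto intro: walk.intros)

lemma walk_rev: "walk G u es v \<Longrightarrow> wf_graph G \<Longrightarrow> walk G v (rev es) u"
proof (induction rule: walk.induct)
  case (walk_cons e u x es w)
  then have "walk G x [e] u"
    by (auto simp: insert_commute wf_graph_def intro!: walk.intros)
  then show ?case using walk_cons walk_append by fastforce
qed (auto intro: walk.intros)

lemma walk_del_edges_iff: "walk (del_edges G F) u es v \<longleftrightarrow> walk G u es v \<and> set es \<inter> F = {}"
proof
  show "walk (del_edges G F) u es v \<Longrightarrow> walk G u es v \<and> set es \<inter> F = {}"
    by (induction rule: walk.induct) (auto intro: walk.intros)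
  show "walk G u es v \<and> set es \<inter> F = {} \<Longrightarrow> walk (del_edges G F) u es v"
    by (elim conjE, induction rule: walk.induct) (auto intro: walk.intros)
qed

lemma walk_transfer:
  "walk G u es v \<Longrightarrow> (\<forall>e \<in> set es. e \<in> edges H \<and> ends H e = ends G e) \<Longrightarrow> v \<in> verts H
   \<Longrightarrow> walk H u es v"
  by (induction rule: walk.induct) (auto intro: walk.intros)

lemma walk_edges: "walk G u es v \<Longrightarrow> set es \<subseteq> edges G"
  by (induction rule: walk.induct) auto

lemma reachable_refl: "u \<in> verts G \<Longrightarrow> reachable G u u"
  by (auto simp: reachable_def intro: walk.intros)

lemma reachable_sym: "wf_graph G \<Longrightarrow> reachable G u v \<Longrightarrow> reachable G v u"
  by (auto simp: reachable_def intro: walk_rev)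

lemma reachable_trans: "reachable G u v \<Longrightarrow> reachable G v w \<Longrightarrow> reachable G u w"
  by (auto simp: reachable_def intro: walk_append)

lemma reachable_edge: "e \<in> edges G \<Longrightarrow> ends G e = {u, x} \<Longrightarrow> x \<in> verts G \<Longrightarrow> reachable G u x"
  unfolding reachable_def by (rule exI[of _ "[e]"]) (auto intro: walk.intros)

lemma reachable_del_edges_iff:
  "reachable (del_edges G F) u v \<longleftrightarrow> (\<exists>es. walk G u es v \<and> set es \<inter> F = {})"
  by (simp add: reachable_def walk_del_edges_iff)

lemma walk_reaches_end_of_edge:
  assumes "walk G u es v" "f \<in> set es" "wf_graph G"
  shows "\<exists>z \<in> ends G f. reachable (del_edges G {f}) u z"
  using assms(1,2)
proof (induction rule: walk.induct)
  case (walk_cons e u x es w)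
  have "u \<in> verts G"
    using walk_cons.hyps(1,2) wf_graph_ends(1)[OF assms(3)] by blast
  show ?case
  proof (cases "e = f")
    case True
    then have "u \<in> ends G f" using walk_cons.hyps(2) by simp
    moreover have "reachable (del_edges G {f}) u u"
      by (rule reachable_refl) (simp add: \<open>u \<in> verts G\<close>)
    ultimately show ?thesis by blast
  next
    case False
    then have "f \<in> set es" using walk_cons.prems by simp
    then obtain z where "z \<in> ends G f" "reachable (del_edges G {f}) x z"
      using walk_cons.IH by blast
    moreover have "reachable (del_edges G {f}) u x"
    proof (rule reachable_edge)
      show "e \<in> edges (del_edges G {f})" using False walk_cons.hyps(1) by simp
      show "ends (del_edges G {f}) e = {u, x}" using walk_cons.hyps(2) by simp
      show "x \<in> verts (del_edges G {f})"
        using walk_start_in_verts[OF walk_cons.hyps(3) assms(3)] by simp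
    qed
    ultimately show ?thesis using reachable_trans[of "del_edges G {f}" u x] by blast
  qed
qed simp

lemma connectedI_reachable_from:
  assumes "wf_graph H" "x \<in> verts H" "\<And>w. w \<in> verts H \<Longrightarrow> reachable H x w"
  shows "connected H"
  unfolding connected_def
proof (intro conjI ballI)
  fix u v assume "u \<in> verts H" "v \<in> verts H"
  then show "reachable H u v"
    using reachable_trans[OF reachable_sym[OF assms(1) assms(3)] assms(3)] by blast
qed (use assms(2) in auto)

lemma edge_cut_iff_disconnected:
  "connected H \<Longrightarrow> F \<subseteq> edges H \<Longrightarrow> edge_cut H F \<longleftrightarrow> \<not> connected (del_edges H F)"
  unfolding edge_cut_def connected_def by simp

lemma bridgeless_iff_connected_del_edge:
  "connected H \<Longrightarrow> bridgeless H \<longleftrightarrow> (\<forall>e \<in> edges H. connected (del_edges H {e}))"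
  by (auto simp: bridgeless_def edge_cut_iff_disconnected)

lemma two_edge_cut_iff_disconnected:
  assumes "connected H" "bridgeless H" "f \<in> edges H" "g \<in> edges H" "f \<noteq> g"
  shows "two_edge_cut H {f, g} \<longleftrightarrow> \<not> connected (del_edges H {f, g})"
proof -
  have "\<not> edge_cut H F'" if "F' \<subset> {f, g}" for F'
  proof -
    have "F' = {} \<or> F' = {f} \<or> F' = {g}" using that by auto
    then show ?thesis
      using assms(2-4) unfolding bridgeless_def edge_cut_def by auto
  qed
  then show ?thesis
    using assms by (auto simp: two_edge_cut_def edge_cut_iff_disconnected)
qed

lemma two_edge_cut_subset: "two_edge_cut G F \<Longrightarrow> F \<subseteq> edges G"
  by (simp add: two_edge_cut_def edge_cut_def)

lemma two_edge_cut_card: "two_edge_cut G F \<Longrightarrow> card F = 2"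
  by (simp add: two_edge_cut_def)

lemma lambda_ge_transfer:
  assumes "lambda_ge H k u v"
    and "\<And>P. walk H u P v \<Longrightarrow> \<exists>P'. walk H' u P' v \<and> set P' \<subseteq> \<beta> (set P)"
    and "\<And>X Y. X \<inter> Y = {} \<Longrightarrow> \<beta> X \<inter> \<beta> Y = {}"
  shows "lambda_ge H' k u v"
proof -
  obtain Ps where Ps: "length Ps = k" "\<forall>P \<in> set Ps. walk H u P v"
    "\<forall>i<k. \<forall>j<k. i \<noteq> j \<longrightarrow> set (Ps ! i) \<inter> set (Ps ! j) = {}"
    using assms(1) unfolding lambda_ge_def by auto
  have "\<forall>P \<in> set Ps. \<exists>P'. walk H' u P' v \<and> set P' \<subseteq> \<beta> (set P)"
    using assms(2) Ps(2) by blast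
  then obtain h where h: "\<forall>P \<in> set Ps. walk H' u (h P) v \<and> set (h P) \<subseteq> \<beta> (set P)"
    by metis
  have "\<forall>i<k. \<forall>j<k. i \<noteq> j \<longrightarrow> set (map h Ps ! i) \<inter> set (map h Ps ! j) = {}"
  proof (intro allI impI)
    fix i j assume ij: "i < k" "j < k" "i \<noteq> j"
    have "\<beta> (set (Ps ! i)) \<inter> \<beta> (set (Ps ! j)) = {}"
      by (rule assms(3)) (use Ps(3) ij in blast)
    moreover have "set (h (Ps ! i)) \<subseteq> \<beta> (set (Ps ! i))" "set (h (Ps ! j)) \<subseteq> \<beta> (set (Ps ! j))"
      using h ij Ps(1) by auto
    ultimately show "set (map h Ps ! i) \<inter> set (map h Ps ! j) = {}" using ij Ps(1) by auto
  qed
  then show ?thesis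
    unfolding lambda_ge_def using Ps h by (intro exI[of _ "map h Ps"]) auto
qed

lemma not_lambda_ge_3_if_separated:
  assumes "\<And>P. walk G u P v \<Longrightarrow> set P \<inter> {f, g} \<noteq> {}"
  shows "\<not> lambda_ge G 3 u v"
proof
  assume "lambda_ge G 3 u v"
  then obtain Ps where Ps: "length Ps = 3" "\<forall>P \<in> set Ps. walk G u P v"
    "\<forall>i<3. \<forall>j<3. i \<noteq> j \<longrightarrow> set (Ps ! i) \<inter> set (Ps ! j) = {}"
    unfolding lambda_ge_def by blast
  have "set (Ps ! i) \<inter> {f, g} \<noteq> {}" if "i < 3" for i
  proof -
    have "walk G u (Ps ! i) v" using Ps(1,2) that by simp
    then show ?thesis by (rule assms)
  qed
  then have "set (Ps ! 0) \<inter> {f, g} \<noteq> {}" "set (Ps ! 1) \<inter> {f, g} \<noteq> {}"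
    "set (Ps ! 2) \<inter> {f, g} \<noteq> {}" by auto
  moreover have "set (Ps ! 0) \<inter> set (Ps ! 1) = {}" "set (Ps ! 0) \<inter> set (Ps ! 2) = {}"
    "set (Ps ! 1) \<inter> set (Ps ! 2) = {}" using Ps(3) by auto
  ultimately show False by blast
qed

fun vwalk :: "('v, 'e) mgraph \<Rightarrow> 'v list \<Rightarrow> 'e list \<Rightarrow> bool" where
  "vwalk G [v] [] = True"
| "vwalk G (u # x # vs) (e # es) \<longleftrightarrow> e \<in> edges G \<and> ends G e = {u, x} \<and> vwalk G (x # vs) es"
| "vwalk G _ _ = False"

lemma vwalk_iff:
  "vwalk G vs es \<longleftrightarrow> length vs = Suc (length es) \<and>
     (\<forall>i < length es. es ! i \<in> edges G \<and> ends G (es ! i) = {vs ! i, vs ! Suc i})"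
proof (induction es arbitrary: vs)
  case Nil
  then show ?case by (cases vs rule: remdups_adj.cases) auto
next
  case (Cons e es)
  then show ?case
    by (cases vs rule: remdups_adj.cases) (auto simp: All_less_Suc2)
qed

lemma vwalk_length: "vwalk G vs es \<Longrightarrow> length vs = Suc (length es)"
  by (simp add: vwalk_iff)

lemma vwalk_nonempty: "vwalk G vs es \<Longrightarrow> vs \<noteq> []"
  by (auto simp: vwalk_iff)

lemma vwalk_Nil_iff: "vwalk G vs [] \<longleftrightarrow> (\<exists>v. vs = [v])"
  by (cases vs rule: remdups_adj.cases) auto

lemma vwalk_ConsE:
  assumes "vwalk G vs (e # es)"
  obtains u x ws where "vs = u # x # ws" "e \<in> edges G" "ends G e = {u, x}" "vwalk G (x # ws) es"
  using assms by (cases vs rule: remdups_adj.cases) auto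

lemma vwalk_edges: "vwalk G vs es \<Longrightarrow> set es \<subseteq> edges G"
  by (induction G vs es rule: vwalk.induct) auto

lemma vwalk_ends: "vwalk G vs es \<Longrightarrow> e \<in> set es \<Longrightarrow> ends G e \<subseteq> set vs"
  by (induction G vs es rule: vwalk.induct) auto

lemma vwalk_distinct_edges: "vwalk G vs es \<Longrightarrow> distinct vs \<Longrightarrow> distinct es"
proof (induction G vs es rule: vwalk.induct)
  case (2 G u x vs e es)
  then show ?case using vwalk_ends[of G "x # vs" es e] by auto
qed auto

lemma vwalk_transfer:
  "vwalk G vs es \<Longrightarrow> (\<forall>e \<in> set es. e \<in> edges H \<and> ends H e = ends G e) \<Longrightarrow> vwalk H vs es"
  by (induction G vs es rule: vwalk.induct) auto

lemma vwalk_del_edges: "vwalk (del_edges G F) vs es \<Longrightarrow> vwalk G vs es \<and> set es \<inter> F = {}"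
  using vwalk_edges[of "del_edges G F" vs es] vwalk_transfer[of "del_edges G F" vs es G] by auto

lemma vwalk_start_in_verts: "vwalk G vs es \<Longrightarrow> es \<noteq> [] \<Longrightarrow> wf_graph G \<Longrightarrow> hd vs \<in> verts G"
  by (cases es) (auto elim!: vwalk_ConsE simp: wf_graph_def)

lemma vwalk_append:
  "vwalk G vs es \<Longrightarrow> vwalk G ws fs \<Longrightarrow> last vs = hd ws \<Longrightarrow> vwalk G (vs @ tl ws) (es @ fs)"
proof (induction G vs es rule: vwalk.induct)
  case (1 G v)
  then show ?case by (cases ws) auto
qed auto

lemma vwalk_split:
  "vwalk G vs (es @ fs) \<Longrightarrow>
     vwalk G (take (Suc (length es)) vs) es \<and> vwalk G (drop (length es) vs) fs"
proof (induction es arbitrary: vs)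
  case Nil
  then show ?case by (cases vs) (auto dest: vwalk_nonempty)
next
  case (Cons e es)
  then obtain u x ws where "vs = u # x # ws" "e \<in> edges G" "ends G e = {u, x}"
    "vwalk G (x # ws) (es @ fs)"
    by (auto elim: vwalk_ConsE)
  then show ?case using Cons.IH[of "x # ws"] by auto
qed

lemma vwalk_drop: "vwalk G vs es \<Longrightarrow> k < length vs \<Longrightarrow> vwalk G (drop k vs) (drop k es)"
  by (auto simp: vwalk_iff)

lemma vwalk_rev: "vwalk G vs es \<Longrightarrow> vwalk G (rev vs) (rev es)"
proof (induction G vs es rule: vwalk.induct)
  case (2 G u x vs e es)
  have "vwalk G (rev (x # vs)) (rev es)" using "2.IH" "2.prems" by simp
  moreover have "vwalk G [x, u] [e]" using "2.prems" by (simp add: insert_commute)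
  ultimately have "vwalk G (rev (x # vs) @ tl [x, u]) (rev es @ [e])"
    by (rule vwalk_append) simp
  then show ?case by simp
qed auto

lemma walk_imp_path:
  "walk G u es v \<Longrightarrow>
     \<exists>vs es'. vwalk G vs es' \<and> distinct vs \<and> hd vs = u \<and> last vs = v \<and> set es' \<subseteq> set es"
proof (induction rule: walk.induct)
  case (walk_nil u)
  then show ?case by (intro exI[of _ "[u]"] exI[of _ "[]"]) auto
next
  case (walk_cons e u x es w)
  then obtain vs es' where P: "vwalk G vs es'" "distinct vs" "hd vs = x" "last vs = w"
    "set es' \<subseteq> set es" by auto
  show ?case
  proof (cases "u \<in> set vs")
    case False
    then show ?thesis using walk_cons P
      by (intro exI[of _ "u # vs"] exI[of _ "e # es'"]) (cases vs; auto)
  next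
    case True
    then obtain k where k: "k < length vs" "vs ! k = u" by (auto simp: in_set_conv_nth)
    have "vwalk G (drop k vs) (drop k es')" using vwalk_drop P k by auto
    moreover have "hd (drop k vs) = u" using k by (simp add: hd_drop_conv_nth)
    moreover have "set (drop k es') \<subseteq> set (e # es)" using P set_drop_subset by fastforce
    ultimately show ?thesis using P k by (intro exI[of _ "drop k vs"] exI[of _ "drop k es'"]) auto
  qed
qed

lemma is_cycle_iff_vwalk:
  "is_cycle G es \<longleftrightarrow>
     es \<noteq> [] \<and> distinct es \<and> (\<exists>vs. vwalk G vs es \<and> hd vs = last vs \<and> distinct (tl vs))"
  unfolding is_cycle_def vwalk_iff by auto

lemma is_cycle_edges: "is_cycle G C \<Longrightarrow> set C \<subseteq> edges G"
  unfolding is_cycle_iff_vwalk using vwalk_edges by metis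

lemma is_cycle_transfer:
  "is_cycle G C \<Longrightarrow> (\<forall>e \<in> set C. e \<in> edges H \<and> ends H e = ends G e) \<Longrightarrow> is_cycle H C"
  unfolding is_cycle_iff_vwalk using vwalk_transfer by metis

lemma is_cycle_close:
  assumes "vwalk G vs es" "distinct vs" "es \<noteq> []" "e \<notin> set es" "e \<in> edges G"
    and "ends G e = {last vs, hd vs}"
  shows "is_cycle G (es @ [e])"
proof -
  have "vwalk G (vs @ tl [last vs, hd vs]) (es @ [e])"
    by (rule vwalk_append[OF assms(1)]) (use assms(5,6) in simp_all)
  moreover have "vs \<noteq> []" using assms(1) vwalk_nonempty by auto
  moreover have "distinct (tl (vs @ [hd vs]))" using assms(2) \<open>vs \<noteq> []\<close> by (cases vs) auto
  moreover have "distinct (es @ [e])" using assms(1,2,4) vwalk_distinct_edges by auto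
  ultimately show ?thesis
    unfolding is_cycle_iff_vwalk by (intro conjI exI[of _ "vs @ [hd vs]"]) auto
qed

lemma is_cycle_open:
  assumes "is_cycle G C" "e \<in> set C"
  obtains vs es where "vwalk G vs es" "distinct vs" "set es = set C - {e}"
    "ends G e = {hd vs, last vs}"
proof -
  obtain vs where vs: "vwalk G vs C" "hd vs = last vs" "distinct (tl vs)" "distinct C"
    using assms(1) unfolding is_cycle_iff_vwalk by auto
  obtain v0 ws where ws: "vs = v0 # ws" using vs(1) vwalk_nonempty by (cases vs) auto
  obtain pre post where C: "C = pre @ [e] @ post" using assms(2) split_list by fastforce
  define k where "k = length pre"
  have len: "length ws = length C" using vwalk_length[OF vs(1)] ws by auto
  then have k: "k < length ws" using C k_def by simp
  have split: "vwalk G (v0 # take k ws) pre" "vwalk G (drop k vs) ([e] @ post)"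
    using vwalk_split[of G vs pre "[e] @ post"] vs(1) C ws k_def by auto
  have "C ! k = e" "k < length C" using C k_def by (simp_all add: nth_append)
  then have ends_e: "ends G e = {vs ! k, ws ! k}"
    using vs(1) ws unfolding vwalk_iff by (metis nth_Cons_Suc)
  have "drop k vs = vs ! k # drop k ws" using Cons_nth_drop_Suc[of k vs] k ws by simp
  then have post: "vwalk G (drop k ws) post"
    using split(2) by (auto elim: vwalk_ConsE)
  have last_ws: "last ws = v0" using vs(2) ws len C by (cases ws) auto
  then have P: "vwalk G (drop k ws @ take k ws) (post @ pre)"
    using vwalk_append[OF post split(1)] k by simp
  have D: "distinct (drop k ws @ take k ws)" using vs(3) ws
    by (metis append_take_drop_id distinct_append list.sel(3) inf_commute)
  have hd: "hd (drop k ws @ take k ws) = ws ! k" using k by (simp add: hd_drop_conv_nth)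
  have last: "last (drop k ws @ take k ws) = vs ! k"
  proof (cases k)
    case 0
    then show ?thesis using last_ws ws by simp
  next
    case (Suc j)
    then have "take k ws \<noteq> []" using k by auto
    then have "last (drop k ws @ take k ws) = last (take k ws)" by simp
    also have "\<dots> = ws ! j" using Suc k \<open>take k ws \<noteq> []\<close> by (simp add: last_conv_nth)
    finally show ?thesis using ws Suc by simp
  qed
  have "set (post @ pre) = set C - {e}" using C vs(4) by auto
  moreover have "ends G e = {hd (drop k ws @ take k ws), last (drop k ws @ take k ws)}"
    using ends_e hd last by (simp add: insert_commute)
  ultimately show ?thesis using that P D by blast
qed

lemma is_cycle_open_oriented:
  assumes "is_cycle G C" "e \<in> set C" "ends G e = {x, y}"
  obtains vs es where "vwalk G vs es" "distinct vs" "set es = set C - {e}" "hd vs = x" "last vs = y"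
proof -
  obtain vs es where vs: "vwalk G vs es" "distinct vs" "set es = set C - {e}"
    "ends G e = {hd vs, last vs}"
    using assms(1,2) by (rule is_cycle_open)
  then have "hd vs = x \<and> last vs = y \<or> hd vs = y \<and> last vs = x"
    using assms(3) by (auto simp: doubleton_eq_iff)
  then show ?thesis
  proof
    assume "hd vs = y \<and> last vs = x"
    moreover have "vs \<noteq> []" using vs(1) by (rule vwalk_nonempty)
    ultimately show ?thesis
      using that[of "rev vs" "rev es"] vwalk_rev[OF vs(1)] vs(2,3) by (simp add: hd_rev last_rev)
  qed (use that vs in blast)
qed

subsection \<open>The two sides of a 2-edge-cut\<close>

lemma reachable_component_reachable:
  assumes "wf_graph H" "A = {v \<in> verts H. reachable H u0 v}" "u \<in> A" "v \<in> A"
  shows "reachable H u v"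
proof -
  have "reachable H u u0" using reachable_sym[OF assms(1)] assms(2,3) by simp
  then show ?thesis using reachable_trans[of H u u0 v] assms(2,4) by simp
qed

lemma reachable_component_closed:
  assumes "wf_graph H" "A = {v \<in> verts H. reachable H u0 v}"
    and "e \<in> edges H" "u \<in> ends H e" "u \<in> A"
  shows "ends H e \<subseteq> A"
proof
  fix w assume "w \<in> ends H e"
  obtain z where z: "ends H e = {u, z}" using ends_eq_doubleton assms(1,3,4) by metis
  then have "z \<in> verts H" using wf_graph_ends(1)[OF assms(1,3)] by auto
  then have "reachable H u z" using reachable_edge[OF assms(3) z] by simp
  then have "z \<in> A" using assms(2,5) reachable_trans[of H u0 u z] \<open>z \<in> verts H\<close> by auto
  then show "w \<in> A" using \<open>w \<in> ends H e\<close> z assms(5) by auto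
qed

lemma cut_edge_crosses:
  assumes wf: "wf_graph G" and "connected G" "bridgeless G" "g \<in> edges G"
    and "u0 \<in> verts G" and A: "A = {v \<in> verts G. reachable (del_edges G {f, g}) u0 v}"
    and w: "w \<in> verts G - A"
  obtains x y where "ends G f = {x, y}" "x \<in> A" "y \<in> verts G - A"
    "reachable (del_edges G {f, g}) w y"
proof -
  let ?H = "del_edges G {g}"
  have H_del_f: "del_edges ?H {f} = del_edges G {f, g}" by (simp add: insert_commute)
  have "\<not> edge_cut G {g}"
    using \<open>bridgeless G\<close> \<open>g \<in> edges G\<close> by (simp add: bridgeless_def)
  then have "reachable ?H u0 w"
    using \<open>connected G\<close> \<open>g \<in> edges G\<close> \<open>u0 \<in> verts G\<close> w
    unfolding connected_def edge_cut_def by auto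
  then obtain es where es: "walk ?H u0 es w" unfolding reachable_def by blast
  have "f \<in> set es"
  proof (rule ccontr)
    assume "f \<notin> set es"
    then have "walk (del_edges ?H {f}) u0 es w"
      using es walk_del_edges_iff[of ?H "{f}" u0 es w] by simp
    then have "reachable (del_edges G {f, g}) u0 w" using H_del_f unfolding reachable_def by auto
    then show False using w A by auto
  qed
  obtain x where x: "x \<in> ends G f" "reachable (del_edges G {f, g}) u0 x"
    using walk_reaches_end_of_edge[OF es \<open>f \<in> set es\<close>] wf_graph_del_edges[OF wf] H_del_f by auto
  have "walk ?H w (rev es) u0" using walk_rev[OF es] wf_graph_del_edges[OF wf] by blast
  then have "\<exists>y \<in> ends ?H f. reachable (del_edges ?H {f}) w y"
    by (rule walk_reaches_end_of_edge) (use \<open>f \<in> set es\<close> wf_graph_del_edges[OF wf] in auto)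
  then obtain y where y: "y \<in> ends G f" "reachable (del_edges G {f, g}) w y"
    using H_del_f by auto
  have wfF: "wf_graph (del_edges G {f, g})" using wf wf_graph_del_edges by blast
  have "x \<in> verts G" using x(2) by (auto simp: reachable_def dest: walk_end_in_verts)
  then have xA: "x \<in> A" using x(2) A by simp
  have yA: "y \<notin> A"
  proof
    assume "y \<in> A"
    then have "reachable (del_edges G {f, g}) u0 y" using A by simp
    then have "reachable (del_edges G {f, g}) u0 w"
      using reachable_trans[OF _ reachable_sym[OF wfF y(2)]] by blast
    then show False using w A by simp
  qed
  have "y \<in> verts G" using y(2) by (auto simp: reachable_def dest: walk_end_in_verts)
  moreover have "ends G f = {x, y}"
  proof -
    have "f \<in> edges G" using es \<open>f \<in> set es\<close> walk_edges by fastforce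
    then obtain z where "ends G f = {x, z}" using ends_eq_doubleton wf x(1) by metis
    then show ?thesis using y(1) xA yA by auto
  qed
  ultimately show ?thesis using that xA yA y(2) by blast
qed


locale two_cut_side =
  fixes G :: "('v, 'e) mgraph" and e1 e2 :: 'e and A :: "'v set" and x1 y1 x2 y2 :: 'v
  assumes wf: "wf_graph G" and conn: "connected G" and bridgeless: "bridgeless G"
    and cut: "two_edge_cut G {e1, e2}"
    and A_verts: "A \<subseteq> verts G"
    and A_conn: "\<And>u v. u \<in> A \<Longrightarrow> v \<in> A \<Longrightarrow> reachable (del_edges G {e1, e2}) u v"
    and B_conn: "\<And>u v. u \<in> verts G - A \<Longrightarrow> v \<in> verts G - A \<Longrightarrow>
      reachable (del_edges G {e1, e2}) u v"
    and A_closed: "\<And>e u. e \<in> edges G \<Longrightarrow> e \<notin> {e1, e2} \<Longrightarrow> u \<in> ends G e \<Longrightarrow> u \<in> A \<Longrightarrow>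
      ends G e \<subseteq> A"
    and ends_e1: "ends G e1 = {x1, y1}" and ends_e2: "ends G e2 = {x2, y2}"
    and x1: "x1 \<in> A" and x2: "x2 \<in> A" and y1: "y1 \<in> verts G - A" and y2: "y2 \<in> verts G - A"

lemma cut_component_complement_connected:
  assumes wf: "wf_graph G" and "connected G" "bridgeless G" "g \<in> edges G"
    and "u0 \<in> verts G" and A: "A = {v \<in> verts G. reachable (del_edges G {f, g}) u0 v}"
    and "u \<in> verts G - A" "v \<in> verts G - A"
  shows "reachable (del_edges G {f, g}) u v"
proof -
  obtain x y where xy: "ends G f = {x, y}" "x \<in> A" "y \<in> verts G - A"
    "reachable (del_edges G {f, g}) u y"
    using cut_edge_crosses[OF assms(1-6) assms(7)] by blast
  obtain x' y' where xy': "ends G f = {x', y'}" "x' \<in> A" "y' \<in> verts G - A"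
    "reachable (del_edges G {f, g}) v y'"
    using cut_edge_crosses[OF assms(1-6) assms(8)] by blast
  have "y' = y" using xy xy' by (auto simp: doubleton_eq_iff)
  then have "reachable (del_edges G {f, g}) y v"
    using reachable_sym[OF wf_graph_del_edges[OF wf] xy'(4)] by simp
  then show ?thesis by (rule reachable_trans[OF xy(4)])
qed

lemma two_cut_side_exists:
  assumes wf: "wf_graph G" and conn: "connected G" and bl: "bridgeless G"
    and cut: "two_edge_cut G {e1, e2}" and comp: "A \<in> components (del_edges G {e1, e2})"
  obtains x1 y1 x2 y2 where "two_cut_side G e1 e2 A x1 y1 x2 y2"
proof -
  let ?F = "del_edges G {e1, e2}"
  have wfF: "wf_graph ?F" using wf by (rule wf_graph_del_edges)
  have e12: "e1 \<in> edges G" "e2 \<in> edges G" using two_edge_cut_subset[OF cut] by simp_all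
  obtain u0 where u0: "u0 \<in> verts G" and A: "A = {v \<in> verts G. reachable ?F u0 v}"
    using comp unfolding components_def by auto
  have A': "A = {v \<in> verts G. reachable (del_edges G {e2, e1}) u0 v}"
    using A by (simp add: insert_commute)
  have A_conn: "reachable ?F u v" if "u \<in> A" "v \<in> A" for u v
    by (rule reachable_component_reachable[OF wfF _ that]) (simp add: A)
  have A_closed: "ends G e \<subseteq> A" if "e \<in> edges G" "e \<notin> {e1, e2}" "u \<in> ends G e" "u \<in> A" for e u
    using reachable_component_closed[OF wfF, of A u0 e u] that A by simp
  have B_conn: "reachable ?F u v" if "u \<in> verts G - A" "v \<in> verts G - A" for u v
    using cut_component_complement_connected[OF wf conn bl e12(2) u0 A that] .
  obtain w where w: "w \<in> verts G - A"
  proof -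
    obtain p q where "p \<in> verts G" "q \<in> verts G" "\<not> reachable ?F p q"
      using cut unfolding two_edge_cut_def edge_cut_def by blast
    moreover have "\<not> (p \<in> A \<and> q \<in> A)" using A_conn calculation(3) by metis
    ultimately show ?thesis using that by blast
  qed
  obtain x1 y1 where xy1: "ends G e1 = {x1, y1}" "x1 \<in> A" "y1 \<in> verts G - A"
    using cut_edge_crosses[OF wf conn bl e12(2) u0 A w] by blast
  obtain x2 y2 where xy2: "ends G e2 = {x2, y2}" "x2 \<in> A" "y2 \<in> verts G - A"
    using cut_edge_crosses[OF wf conn bl e12(1) u0 A' w] by blast
  have "two_cut_side G e1 e2 A x1 y1 x2 y2"
  proof (unfold_locales)
    show "A \<subseteq> verts G" using A by blast
  qed (fact wf conn bl cut xy1 xy2 | rule A_conn B_conn A_closed; assumption)+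
  then show ?thesis by (rule that)
qed

context two_cut_side
begin

abbreviation "B \<equiv> verts G - A"
abbreviation "edges_A \<equiv> {e \<in> edges G - {e1, e2}. ends G e \<subseteq> A}"
abbreviation "edges_B \<equiv> {e \<in> edges G - {e1, e2}. ends G e \<subseteq> B}"

lemma e1_neq_e2: "e1 \<noteq> e2"
  using two_edge_cut_card[OF cut] by (cases "e1 = e2") simp_all

lemma e1_in_edges: "e1 \<in> edges G" and e2_in_edges: "e2 \<in> edges G"
  using two_edge_cut_subset[OF cut] by simp_all

lemma B_closed:
  assumes "e \<in> edges G" "e \<notin> {e1, e2}" "u \<in> ends G e" "u \<in> B"
  shows "ends G e \<subseteq> B"
proof
  fix w assume w: "w \<in> ends G e"
  have "w \<in> verts G" using w wf_graph_ends(1)[OF wf assms(1)] by blast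
  moreover have "w \<notin> A" using A_closed[OF assms(1,2) w] assms(3,4) by blast
  ultimately show "w \<in> B" by simp
qed

lemma edge_inside_side:
  assumes "e \<in> edges G" "e \<notin> {e1, e2}"
  shows "ends G e \<subseteq> A \<or> ends G e \<subseteq> B"
proof -
  obtain u where u: "u \<in> ends G e" using wf_graph_ends(2)[OF wf assms(1)] by blast
  then have "u \<in> A \<or> u \<in> B" using wf_graph_ends(1)[OF wf assms(1)] by blast
  then show ?thesis using A_closed[OF assms u] B_closed[OF assms u] by blast
qed

lemma edges_A_edges_B_disjoint: "edges_A \<inter> edges_B = {}"
  using wf_graph_ends(2)[OF wf] by fastforce

lemma two_cut_side_complement: "two_cut_side G e1 e2 B y1 x1 y2 x2"
proof -
  have "verts G - B = A" using A_verts by blast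
  then show ?thesis
    using wf conn bridgeless cut A_conn B_conn B_closed ends_e1 ends_e2 x1 x2 y1 y2
    by unfold_locales (auto simp: insert_commute)
qed

lemma walk_inside_A: "walk G u es v \<Longrightarrow> set es \<inter> {e1, e2} = {} \<Longrightarrow> u \<in> A \<Longrightarrow> v \<in> A \<and> set es \<subseteq> edges_A"
proof (induction rule: walk.induct)
  case (walk_cons e u x es w)
  then have "ends G e \<subseteq> A" using A_closed[of e u] by auto
  then show ?case using walk_cons by auto
qed auto

lemma walk_inside_B: "walk G u es v \<Longrightarrow> set es \<inter> {e1, e2} = {} \<Longrightarrow> u \<in> B \<Longrightarrow> v \<in> B \<and> set es \<subseteq> edges_B"
proof (induction rule: walk.induct)
  case (walk_cons e u x es w)
  then have "ends G e \<subseteq> B" using B_closed[of e u] by auto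
  then show ?case using walk_cons by auto
qed auto

lemma A_walk:
  assumes "u \<in> A" "v \<in> A"
  obtains W where "walk G u W v" "set W \<subseteq> edges_A"
proof -
  obtain W where "walk G u W v" "set W \<inter> {e1, e2} = {}"
    using A_conn[OF assms] unfolding reachable_del_edges_iff by blast
  then show ?thesis using that walk_inside_A assms(1) by blast
qed

lemma B_walk:
  assumes "u \<in> B" "v \<in> B"
  obtains W where "walk G u W v" "set W \<subseteq> edges_B"
proof -
  obtain W where "walk G u W v" "set W \<inter> {e1, e2} = {}"
    using B_conn[OF assms] unfolding reachable_del_edges_iff by blast
  then show ?thesis using that walk_inside_B assms(1) by blast
qed

definition A_end where "A_end f z \<longleftrightarrow> f = e1 \<and> z = x1 \<or> f = e2 \<and> z = x2"

lemma A_end_in_A: "A_end f z \<Longrightarrow> z \<in> A"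
  using x1 x2 by (auto simp: A_end_def)

lemma A_end_unique: "A_end f z \<Longrightarrow> A_end f z' \<Longrightarrow> z = z'"
  using e1_neq_e2 by (auto simp: A_end_def)

lemma cut_edge_from_A:
  assumes "f \<in> {e1, e2}" "ends G f = {u, x}" "u \<in> A"
  shows "A_end f u" "x \<in> B"
  using assms ends_e1 ends_e2 x1 x2 y1 y2 by (auto simp: A_end_def doubleton_eq_iff)

lemma cut_edge_from_B:
  assumes "f \<in> {e1, e2}" "ends G f = {u, x}" "u \<in> B"
  shows "A_end f x"
  using assms ends_e1 ends_e2 x1 x2 y1 y2 by (auto simp: A_end_def doubleton_eq_iff)

end

subsection \<open>Reducing the graph\<close>

locale graph_reduction = two_cut_side +
  fixes e'
  assumes e'_fresh: "e' \<notin> edges G"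
begin

abbreviation "G1 \<equiv> reduce G e1 e2 A e'"

lemma G1_verts [simp]: "verts G1 = A"
  and G1_edges: "edges G1 = edges_A \<union> {e'}"
  and G1_ends: "e \<noteq> e' \<Longrightarrow> ends G1 e = ends G e"
  by (simp_all add: reduce_def)

lemma G1_ends_new: "ends G1 e' = {x1, x2}"
  using ends_e1 ends_e2 x1 x2 y1 y2 by (auto simp: reduce_def)

lemma e'_notin_edges_A: "e' \<notin> edges_A"
  using e'_fresh by simp

lemma edges_A_G1: "e \<in> edges_A \<Longrightarrow> e \<in> edges G1 \<and> ends G1 e = ends G e"
  using e'_notin_edges_A G1_edges G1_ends by (metis UnI1)

definition project_edges where
  "project_edges X = X \<inter> edges_A \<union> (if e1 \<in> X \<and> e2 \<in> X then {e'} else {})"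

definition lift_edges where
  "lift_edges X = X \<inter> edges_A \<union> (if e' \<in> X then {e1, e2} \<union> edges_B else {})"

lemma project_edges_mono: "X \<subseteq> Y \<Longrightarrow> project_edges X \<subseteq> project_edges Y"
  by (auto simp: project_edges_def)

lemma project_edges_disjoint: "X \<inter> Y = {} \<Longrightarrow> project_edges X \<inter> project_edges Y = {}"
  using e'_notin_edges_A by (auto simp: project_edges_def)

lemma lift_edges_disjoint: "X \<inter> Y = {} \<Longrightarrow> lift_edges X \<inter> lift_edges Y = {}"
  using edges_A_edges_B_disjoint by (auto simp: lift_edges_def)

lemma walk_G1_switch_A_end:
  assumes "A_end f u" "A_end g z" "f \<noteq> g" "walk G1 z es w"
  shows "walk G1 u (e' # es) w"
proof (rule walk_cons)
  show "ends G1 e' = {u, z}" using assms(1-3) G1_ends_new by (auto simp: A_end_def)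
qed (use assms(4) G1_edges in auto)

text \<open>A walk that enters \<open>B\<close> through one cut edge must return through a cut edge; in \<open>G1\<close>
  the detour becomes \<open>e'\<close>, or disappears if it returns through the same edge.\<close>

lemma walk_project_aux:
  assumes "walk G u es v" "v \<in> A"
  shows "(u \<in> A \<longrightarrow> (\<exists>es'. walk G1 u es' v \<and> set es' \<subseteq> project_edges (set es))) \<and>
    (u \<in> B \<longrightarrow> (\<exists>f z es'. A_end f z \<and> f \<in> set es \<and>
       walk G1 z es' v \<and> set es' \<subseteq> project_edges (set es)))"
  using assms
proof (induction rule: walk.induct)
  case (walk_nil u)
  then show ?case by (intro conjI impI exI[of _ "[]"]) (auto intro: walk.intros)
next
  case (walk_cons e u x es w)
  note IH = walk_cons.IH[OF walk_cons.prems]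
  have mono: "project_edges (set es) \<subseteq> project_edges (set (e # es))"
    by (rule project_edges_mono) auto
  show ?case
  proof (intro conjI impI)
    assume u: "u \<in> A"
    show "\<exists>es'. walk G1 u es' w \<and> set es' \<subseteq> project_edges (set (e # es))"
    proof (cases "e \<in> {e1, e2}")
      case False
      then have e: "e \<in> edges_A" "x \<in> A" using A_closed[of e u] walk_cons.hyps(1,2) u by auto
      then obtain es' where "walk G1 x es' w" "set es' \<subseteq> project_edges (set es)" using IH by blast
      moreover have "e \<in> project_edges (set (e # es))" using e(1) by (simp add: project_edges_def)
      ultimately show ?thesis using walk_cons.hyps(2) edges_A_G1[OF e(1)] mono
        by (intro exI[of _ "e # es'"]) (auto intro: walk.intros)
    next
      case True
      then have "A_end e u" "x \<in> B" using cut_edge_from_A walk_cons.hyps(2) u by blast+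
      then obtain f z es' where fz: "A_end f z" "f \<in> set es" "walk G1 z es' w"
        "set es' \<subseteq> project_edges (set es)" using IH by blast
      show ?thesis
      proof (cases "f = e")
        case False
        then have "walk G1 u (e' # es') w" using walk_G1_switch_A_end \<open>A_end e u\<close> fz(1,3) by blast
        moreover have "e' \<in> project_edges (set (e # es))"
          using \<open>A_end e u\<close> fz(1,2) False by (auto simp: A_end_def project_edges_def)
        ultimately show ?thesis using fz(4) mono by (intro exI[of _ "e' # es'"]) auto
      next
        case True
        then have "z = u" using A_end_unique fz(1) \<open>A_end e u\<close> by blast
        then show ?thesis using fz(3,4) mono by blast
      qed
    qed
  next
    assume u: "u \<in> B"
    show "\<exists>f z es'. A_end f z \<and> f \<in> set (e # es) \<and>
      walk G1 z es' w \<and> set es' \<subseteq> project_edges (set (e # es))"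
    proof (cases "e \<in> {e1, e2}")
      case False
      then have "x \<in> B" using B_closed[of e u] walk_cons.hyps(1,2) u by auto
      then show ?thesis using IH mono by fastforce
    next
      case True
      then have "A_end e x" using cut_edge_from_B walk_cons.hyps(2) u by blast
      then show ?thesis using IH A_end_in_A mono by fastforce
    qed
  qed
qed

lemma walk_project:
  "walk G u es v \<Longrightarrow> u \<in> A \<Longrightarrow> v \<in> A \<Longrightarrow> \<exists>es'. walk G1 u es' v \<and> set es' \<subseteq> project_edges (set es)"
  using walk_project_aux by blast

lemma x1_x2_walk: "\<exists>M. walk G x1 M x2 \<and> set M \<subseteq> {e1, e2} \<union> edges_B"
proof -
  obtain W where W: "walk G y1 W y2" "set W \<subseteq> edges_B" using B_walk y1 y2 by blast
  have "walk G y2 [e2] x2"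
    using e2_in_edges ends_e2 x2 A_verts by (auto intro!: walk.intros simp: insert_commute)
  then have "walk G x1 (e1 # W @ [e2]) x2"
    using W(1) e1_in_edges ends_e1 by (auto intro: walk.intros walk_append)
  then show ?thesis using W(2) by (intro exI[of _ "e1 # W @ [e2]"]) auto
qed

lemma walk_lift: "walk G1 u es v \<Longrightarrow> \<exists>es'. walk G u es' v \<and> set es' \<subseteq> lift_edges (set es)"
proof (induction rule: walk.induct)
  case (walk_nil u)
  then show ?case using A_verts by (intro exI[of _ "[]"]) (auto intro: walk.intros)
next
  case (walk_cons e u x es w)
  then obtain es' where es': "walk G x es' w" "set es' \<subseteq> lift_edges (set es)" by blast
  have mono: "lift_edges (set es) \<subseteq> lift_edges (set (e # es))" by (auto simp: lift_edges_def)
  show ?case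
  proof (cases "e = e'")
    case False
    then have "e \<in> edges_A" using walk_cons.hyps(1) G1_edges by auto
    then have "walk G u (e # es') w" "e \<in> lift_edges (set (e # es))"
      using walk_cons.hyps(2) es'(1) G1_ends[OF False]
      by (auto intro: walk.intros simp: lift_edges_def)
    then show ?thesis using es'(2) mono by (intro exI[of _ "e # es'"]) auto
  next
    case True
    then have ux: "{u, x} = {x1, x2}" using walk_cons.hyps(2) G1_ends_new by simp
    obtain M where M: "walk G x1 M x2" "set M \<subseteq> {e1, e2} \<union> edges_B" using x1_x2_walk by blast
    have "\<exists>M'. walk G u M' x \<and> set M' \<subseteq> {e1, e2} \<union> edges_B"
    proof (cases "u = x1 \<and> x = x2")
      case False
      then have "u = x2" "x = x1" using ux by (auto simp: doubleton_eq_iff)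
      then show ?thesis using M walk_rev[OF M(1) wf] by (intro exI[of _ "rev M"]) auto
    qed (use M in blast)
    then obtain M' where M': "walk G u M' x" "set M' \<subseteq> {e1, e2} \<union> edges_B" by blast
    have "walk G u (M' @ es') w" using M'(1) es'(1) by (rule walk_append)
    moreover have "{e1, e2} \<union> edges_B \<subseteq> lift_edges (set (e # es))"
      using True by (auto simp: lift_edges_def)
    then have "set (M' @ es') \<subseteq> lift_edges (set (e # es))"
      using M'(2) es'(2) mono by auto
    ultimately show ?thesis by blast
  qed
qed

definition restore where "restore f = (if f = e' then e1 else f)"

lemma restore_image:
  "F \<subseteq> edges G1 \<Longrightarrow> restore ` F = F \<inter> edges_A \<union> (if e' \<in> F then {e1} else {})"
  using e'_notin_edges_A unfolding G1_edges by (auto simp: restore_def)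

lemma restore_in_edges: "f \<in> edges G1 \<Longrightarrow> restore f \<in> edges G"
  using e1_in_edges unfolding G1_edges by (auto simp: restore_def)

lemma restore_inj: "f \<in> edges G1 \<Longrightarrow> g \<in> edges G1 \<Longrightarrow> restore f = restore g \<Longrightarrow> f = g"
  unfolding G1_edges restore_def by (auto split: if_splits)

lemma connected_G1_del_edges_if_connected:
  assumes F: "F \<subseteq> edges G1" and conn_G: "connected (del_edges G (restore ` F))"
  shows "connected (del_edges G1 F)"
  unfolding connected_def
proof (intro conjI ballI)
  show "verts (del_edges G1 F) \<noteq> {}" using x1 by auto
  fix u v assume "u \<in> verts (del_edges G1 F)" "v \<in> verts (del_edges G1 F)"
  then have uv: "u \<in> A" "v \<in> A" by simp_all
  then have "reachable (del_edges G (restore ` F)) u v"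
    using conn_G A_verts unfolding connected_def by auto
  then obtain es where es: "walk G u es v" "set es \<inter> restore ` F = {}"
    unfolding reachable_del_edges_iff by blast
  obtain es' where es': "walk G1 u es' v" "set es' \<subseteq> project_edges (set es)"
    using walk_project[OF es(1) uv] by blast
  have "project_edges (set es) \<inter> F = {}"
    using es(2) restore_image[OF F] F e'_notin_edges_A unfolding G1_edges
    by (auto simp: project_edges_def split: if_splits)
  then show "reachable (del_edges G1 F) u v"
    unfolding reachable_del_edges_iff using es' by blast
qed

lemma connected_del_edges_if_connected_G1:
  assumes F: "F \<subseteq> edges G1" and conn_G1: "connected (del_edges G1 F)"
  shows "connected (del_edges G (restore ` F))"
proof (rule connectedI_reachable_from)
  \<comment> \<open>\<open>e2\<close> is never deleted here, so from \<open>x2\<close> all of \<open>B\<close> stays reachable through \<open>e2\<close>.\<close>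
  show "wf_graph (del_edges G (restore ` F))" using wf by (rule wf_graph_del_edges)
  show "x2 \<in> verts (del_edges G (restore ` F))" using x2 A_verts by auto
  fix w assume w: "w \<in> verts (del_edges G (restore ` F))"
  show "reachable (del_edges G (restore ` F)) x2 w"
  proof (cases "w \<in> A")
    case True
    then have "reachable (del_edges G1 F) x2 w" using conn_G1 x2 unfolding connected_def by simp
    then obtain es where es: "walk G1 x2 es w" "set es \<inter> F = {}"
      unfolding reachable_del_edges_iff by blast
    obtain es' where es': "walk G x2 es' w" "set es' \<subseteq> lift_edges (set es)"
      using walk_lift[OF es(1)] by blast
    have "lift_edges (set es) \<inter> restore ` F = {}"
      using es(2) restore_image[OF F] edges_A_edges_B_disjoint e1_neq_e2
      by (auto simp: lift_edges_def split: if_splits)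
    then show ?thesis unfolding reachable_del_edges_iff using es' by blast
  next
    case False
    then obtain W where W: "walk G y2 W w" "set W \<subseteq> edges_B" using B_walk y2 w by auto
    then have "walk G x2 (e2 # W) w" using e2_in_edges ends_e2 by (auto intro: walk.intros)
    moreover have "set (e2 # W) \<inter> restore ` F = {}"
      using W(2) restore_image[OF F] edges_A_edges_B_disjoint e1_neq_e2 by auto
    ultimately show ?thesis unfolding reachable_del_edges_iff by blast
  qed
qed

lemma connected_G1: "connected G1"
  using connected_G1_del_edges_if_connected[of "{}"] conn by simp

lemma bridgeless_G1: "bridgeless G1"
  unfolding bridgeless_iff_connected_del_edge[OF connected_G1]
proof
  fix h assume h: "h \<in> edges G1"
  have "connected (del_edges G {restore h})"
    using bridgeless restore_in_edges[OF h] bridgeless_iff_connected_del_edge[OF conn] by blast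
  then show "connected (del_edges G1 {h})"
    using connected_G1_del_edges_if_connected[of "{h}"] h by simp
qed

lemma two_edge_cut_G1_iff:
  assumes "f \<in> edges G1" "g \<in> edges G1" "f \<noteq> g"
  shows "two_edge_cut G1 {f, g} \<longleftrightarrow> two_edge_cut G {restore f, restore g}"
proof -
  have "connected (del_edges G1 {f, g}) \<longleftrightarrow> connected (del_edges G {restore f, restore g})"
    using connected_G1_del_edges_if_connected[of "{f, g}"]
      connected_del_edges_if_connected_G1[of "{f, g}"] assms(1,2) by auto
  moreover have "restore f \<noteq> restore g" using restore_inj assms by blast
  ultimately show ?thesis
    using two_edge_cut_iff_disconnected[OF connected_G1 bridgeless_G1 assms]
      two_edge_cut_iff_disconnected[OF conn bridgeless restore_in_edges restore_in_edges]
      assms(1,2) by auto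
qed

lemma lambda_ge_G1_iff:
  assumes "u \<in> A" "v \<in> A"
  shows "lambda_ge G1 k u v \<longleftrightarrow> lambda_ge G k u v"
proof
  show "lambda_ge G1 k u v \<Longrightarrow> lambda_ge G k u v"
    by (erule lambda_ge_transfer[where \<beta> = lift_edges]) (use walk_lift lift_edges_disjoint in auto)
  show "lambda_ge G k u v \<Longrightarrow> lambda_ge G1 k u v"
    by (erule lambda_ge_transfer[where \<beta> = project_edges])
      (use walk_project assms project_edges_disjoint in auto)
qed

end

subsection \<open>Reducing the cactus\<close>

locale cactus_reduction = graph_reduction +
  fixes T \<phi> \<psi> t'
  assumes rep: "cactus_rep_2cuts G T \<phi> \<psi>" and t'_fresh: "t' \<notin> edges T"
begin

lemma cactus_T: "cactus T"
  using rep by (simp add: cactus_rep_2cuts_def)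

lemma phi_verts: "\<phi> ` verts G = verts T"
  using rep by (simp add: cactus_rep_2cuts_def)

lemma phi_eq_iff: "u \<in> verts G \<Longrightarrow> v \<in> verts G \<Longrightarrow> \<phi> u = \<phi> v \<longleftrightarrow> lambda_ge G 3 u v"
  using rep by (simp add: cactus_rep_2cuts_def)

lemma psi_bij: "bij_betw \<psi> (external_edges G \<phi>) (edges T)"
  using rep by (simp add: cactus_rep_2cuts_def)

lemma ends_psi: "e \<in> external_edges G \<phi> \<Longrightarrow> ends T (\<psi> e) = \<phi> ` ends G e"
  using rep by (simp add: cactus_rep_2cuts_def)

lemma two_edge_cut_iff_cycle:
  "e \<in> external_edges G \<phi> \<Longrightarrow> f \<in> external_edges G \<phi> \<Longrightarrow> e \<noteq> f \<Longrightarrow>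
    two_edge_cut G {e, f} \<longleftrightarrow> on_common_cycle T (\<psi> e) (\<psi> f)"
  using rep by (simp add: cactus_rep_2cuts_def)

lemma wf_T: "wf_graph T"
  using cactus_T by (simp add: cactus_def)

lemma T_ends_card: "t \<in> edges T \<Longrightarrow> card (ends T t) = 2"
  using cactus_T by (simp add: cactus_def)

lemma T_cycles_unique:
  "is_cycle T C \<Longrightarrow> is_cycle T C' \<Longrightarrow> t \<in> set C \<Longrightarrow> t \<in> set C' \<Longrightarrow> set C = set C'"
  using cactus_T unfolding cactus_def by blast

definition N_A where "N_A = \<phi> ` A"
definition N_B where "N_B = \<phi> ` B"

abbreviation "a \<equiv> \<psi> e1"
abbreviation "b \<equiv> \<psi> e2"
abbreviation "p1 \<equiv> \<phi> x1"
abbreviation "p2 \<equiv> \<phi> x2"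
abbreviation "q1 \<equiv> \<phi> y1"
abbreviation "q2 \<equiv> \<phi> y2"
abbreviation "T_cut \<equiv> del_edges T {a, b}"
definition edges_N_A where "edges_N_A = {t \<in> edges T - {a, b}. ends T t \<subseteq> N_A}"

lemma edges_N_A_iff: "t \<in> edges_N_A \<longleftrightarrow> t \<in> edges T \<and> t \<noteq> a \<and> t \<noteq> b \<and> ends T t \<subseteq> N_A"
  by (auto simp: edges_N_A_def)

abbreviation "T1 \<equiv> reduce_noloop T a b (side_of T {a, b} N_A) t'"

lemma phi_A_neq_phi_B:
  assumes "s \<in> A" "p \<in> B"
  shows "\<phi> s \<noteq> \<phi> p"
proof
  assume "\<phi> s = \<phi> p"
  then have "lambda_ge G 3 s p" using phi_eq_iff[of s p] assms A_verts by auto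
  moreover have "set P \<inter> {e1, e2} \<noteq> {}" if "walk G s P p" for P
  proof
    assume "set P \<inter> {e1, e2} = {}"
    then have "p \<in> A" using walk_inside_A[OF that] assms(1) by simp
    then show False using assms(2) by simp
  qed
  ultimately show False using not_lambda_ge_3_if_separated[of G s p e1 e2] by simp
qed

lemma N_A_N_B_disjoint: "N_A \<inter> N_B = {}"
proof -
  have "n \<notin> N_B" if "n \<in> N_A" for n using that phi_A_neq_phi_B by (auto simp: N_A_def N_B_def)
  then show ?thesis by blast
qed

lemma verts_T: "verts T = N_A \<union> N_B"
proof -
  have "A \<union> B = verts G" using A_verts by blast
  then have "N_A \<union> N_B = \<phi> ` verts G" unfolding N_A_def N_B_def by (metis image_Un)
  then show ?thesis using phi_verts by simp
qed

lemma e1_external: "e1 \<in> external_edges G \<phi>" and e2_external: "e2 \<in> external_edges G \<phi>"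
proof -
  have "\<phi> x1 \<noteq> \<phi> y1" "\<phi> x2 \<noteq> \<phi> y2"
    using phi_A_neq_phi_B[OF x1 y1] phi_A_neq_phi_B[OF x2 y2] by simp_all
  then show "e1 \<in> external_edges G \<phi>" "e2 \<in> external_edges G \<phi>"
    using ends_e1 ends_e2 e1_in_edges e2_in_edges by (simp_all add: external_edges_def)
qed

lemma ends_a: "ends T a = {p1, q1}" and ends_b: "ends T b = {p2, q2}"
  using ends_psi[OF e1_external] ends_psi[OF e2_external] ends_e1 ends_e2 by auto

lemma a_neq_b: "a \<noteq> b"
  using psi_bij e1_external e2_external e1_neq_e2 unfolding bij_betw_def inj_on_def by blast

lemma a_in_edges: "a \<in> edges T" and b_in_edges: "b \<in> edges T"
  using psi_bij e1_external e2_external unfolding bij_betw_def by auto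

lemma p1_N_A: "p1 \<in> N_A" and p2_N_A: "p2 \<in> N_A" and q1_N_B: "q1 \<in> N_B" and q2_N_B: "q2 \<in> N_B"
  using x1 x2 y1 y2 by (simp_all add: N_A_def N_B_def)

lemma T_edge_inside_side:
  assumes "t \<in> edges T" "t \<notin> {a, b}"
  shows "ends T t \<subseteq> N_A \<or> ends T t \<subseteq> N_B"
proof -
  obtain e where e: "e \<in> external_edges G \<phi>" "t = \<psi> e"
    using assms(1) psi_bij unfolding bij_betw_def by auto
  then have "e \<in> edges G" "e \<notin> {e1, e2}" using assms(2) unfolding external_edges_def by auto
  then have "ends G e \<subseteq> A \<or> ends G e \<subseteq> B" by (rule edge_inside_side)
  then show ?thesis using ends_psi[OF e(1)] e(2) unfolding N_A_def N_B_def by auto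
qed

lemma reachable_T_cut_if_walk:
  "walk G u es v \<Longrightarrow> set es \<inter> {e1, e2} = {} \<Longrightarrow> reachable T_cut (\<phi> u) (\<phi> v)"
proof (induction rule: walk.induct)
  case (walk_nil u)
  then show ?case using phi_verts by (intro reachable_refl) auto
next
  case (walk_cons e u x es w)
  then have IH: "reachable T_cut (\<phi> x) (\<phi> w)" by simp
  have "reachable T_cut (\<phi> u) (\<phi> x)"
  proof (cases "\<phi> u = \<phi> x")
    case True
    then show ?thesis
      using walk_start_in_verts[OF walk_cons.hyps(3) wf] phi_verts reachable_refl[of "\<phi> x" T_cut]
      by auto
  next
    case False
    then have ext: "e \<in> external_edges G \<phi>"
      using walk_cons.hyps(1,2) unfolding external_edges_def by auto
    have "\<psi> e \<notin> {a, b}"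
      using psi_bij ext e1_external e2_external walk_cons.prems
      unfolding bij_betw_def inj_on_def by auto
    moreover have "\<psi> e \<in> edges T" using psi_bij ext unfolding bij_betw_def by auto
    moreover have "ends T (\<psi> e) = {\<phi> u, \<phi> x}" using ends_psi[OF ext] walk_cons.hyps(2) by simp
    moreover have "\<phi> x \<in> verts T"
      using walk_start_in_verts[OF walk_cons.hyps(3) wf] phi_verts by auto
    ultimately show ?thesis by (intro reachable_edge) auto
  qed
  then show ?case using IH by (rule reachable_trans)
qed

lemma N_A_conn:
  assumes "u \<in> N_A" "v \<in> N_A"
  shows "reachable T_cut u v"
proof -
  obtain s s' where s: "s \<in> A" "s' \<in> A" "u = \<phi> s" "v = \<phi> s'"
    using assms unfolding N_A_def by blast
  obtain W where "walk G s W s'" "set W \<subseteq> edges_A" using A_walk[OF s(1,2)] by blast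
  then have "reachable T_cut (\<phi> s) (\<phi> s')" by (intro reachable_T_cut_if_walk) auto
  then show ?thesis using s(3,4) by simp
qed

lemma N_B_conn:
  assumes "u \<in> N_B" "v \<in> N_B"
  shows "reachable T_cut u v"
proof -
  obtain s s' where s: "s \<in> B" "s' \<in> B" "u = \<phi> s" "v = \<phi> s'"
    using assms unfolding N_B_def by blast
  obtain W where "walk G s W s'" "set W \<subseteq> edges_B" using B_walk[OF s(1,2)] by blast
  then have "reachable T_cut (\<phi> s) (\<phi> s')" by (intro reachable_T_cut_if_walk) auto
  then show ?thesis using s(3,4) by simp
qed

lemma vwalk_inside_side:
  "vwalk T vs es \<Longrightarrow> set es \<inter> {a, b} = {} \<Longrightarrow> X = N_A \<or> X = N_B \<Longrightarrow> hd vs \<in> X \<Longrightarrow> set vs \<subseteq> X"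
proof (induction es arbitrary: vs)
  case Nil
  then show ?case by (auto simp: vwalk_Nil_iff)
next
  case (Cons e es)
  obtain u x ws where vs: "vs = u # x # ws" "e \<in> edges T" "ends T e = {u, x}"
    "vwalk T (x # ws) es"
    using Cons.prems(1) by (rule vwalk_ConsE)
  have "ends T e \<subseteq> N_A \<or> ends T e \<subseteq> N_B"
    using T_edge_inside_side[OF vs(2)] Cons.prems(2) by auto
  moreover have "u \<in> X" "u \<in> ends T e" "x \<in> ends T e" using Cons.prems(4) vs(1,3) by simp_all
  ultimately have "x \<in> X" using Cons.prems(3) N_A_N_B_disjoint by blast
  then have "set (x # ws) \<subseteq> X" using Cons.IH[OF vs(4)] Cons.prems(2,3) by simp
  then show ?case using vs(1) \<open>u \<in> X\<close> by simp
qed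

lemma walk_T_cut_inside_N_A:
  "walk T_cut s es t \<Longrightarrow> s \<in> N_A \<Longrightarrow> t \<in> N_A \<and> set es \<subseteq> edges_N_A"
proof (induction rule: walk.induct)
  case (walk_cons e u x es w)
  have e: "e \<in> edges T" "e \<notin> {a, b}" using walk_cons.hyps(1) by auto
  have "u \<in> ends T e" using walk_cons.hyps(2) by simp
  then have "ends T e \<subseteq> N_A"
    using T_edge_inside_side[OF e] walk_cons.prems N_A_N_B_disjoint by blast
  moreover have "x \<in> ends T e" using walk_cons.hyps(2) by simp
  ultimately show ?case using walk_cons.IH e by (auto simp: edges_N_A_iff)
qed simp

lemma side_of_N_A: "side_of T {a, b} N_A = N_A"
proof
  show "side_of T {a, b} N_A \<subseteq> N_A"
    using walk_T_cut_inside_N_A unfolding side_of_def reachable_def by blast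
  show "N_A \<subseteq> side_of T {a, b} N_A"
    unfolding side_of_def using verts_T reachable_refl[of _ T_cut] by auto
qed

lemma T1_eq:
  "T1 = (if p1 = p2 then \<lparr>verts = N_A, edges = edges_N_A, ends = ends T\<rparr>
    else \<lparr>verts = N_A, edges = edges_N_A \<union> {t'}, ends = (ends T)(t' := {p1, p2})\<rparr>)"
proof -
  have "(ends T a \<union> ends T b) \<inter> N_A = {p1, p2}"
    unfolding ends_a ends_b using p1_N_A p2_N_A q1_N_B q2_N_B N_A_N_B_disjoint by auto
  moreover have "card {p1, p2} = 1 \<longleftrightarrow> p1 = p2" by (cases "p1 = p2") simp_all
  ultimately show ?thesis unfolding reduce_noloop_def reduce_def side_of_N_A edges_N_A_def by simp
qed

lemma T1_verts [simp]: "verts T1 = N_A"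
  and T1_edges: "edges T1 = edges_N_A \<union> (if p1 = p2 then {} else {t'})"
  and T1_ends: "t \<noteq> t' \<Longrightarrow> ends T1 t = ends T t"
  and T1_ends_new: "p1 \<noteq> p2 \<Longrightarrow> ends T1 t' = {p1, p2}"
  by (simp_all add: T1_eq)

lemma t'_notin_edges_N_A: "t' \<notin> edges_N_A"
  using t'_fresh by (simp add: edges_N_A_iff)

lemma edges_N_A_T1:
  assumes "t \<in> edges_N_A"
  shows "t \<in> edges T1 \<and> ends T1 t = ends T t"
proof -
  have "t \<noteq> t'" using assms t'_notin_edges_N_A by blast
  moreover have "t \<in> edges T1" using assms unfolding T1_edges by blast
  ultimately show ?thesis using T1_ends by blast
qed

lemma t'_in_T1_iff: "t' \<in> edges T1 \<longleftrightarrow> p1 \<noteq> p2"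
  using t'_notin_edges_N_A unfolding T1_edges by auto

lemma T1_edge_cases: "t \<in> edges T1 \<Longrightarrow> t \<noteq> t' \<Longrightarrow> t \<in> edges_N_A"
  unfolding T1_edges by (auto split: if_splits)

lemma wf_T1: "wf_graph T1"
proof -
  have "finite N_A" using wf_T verts_T unfolding wf_graph_def by (metis finite_Un)
  moreover have "finite (edges T1)"
  proof -
    have "edges_N_A \<subseteq> edges T" by (auto simp: edges_N_A_iff)
    then show ?thesis using wf_T finite_subset unfolding T1_edges wf_graph_def by auto
  qed
  moreover have "ends T1 t \<subseteq> N_A \<and> ends T1 t \<noteq> {} \<and> card (ends T1 t) \<le> 2" if "t \<in> edges T1" for t
  proof (cases "t = t'")
    case True
    then show ?thesis using that t'_in_T1_iff T1_ends_new p1_N_A p2_N_A by simp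
  next
    case False
    then have "t \<in> edges_N_A" using that T1_edge_cases by blast
    then show ?thesis using edges_N_A_T1 wf_T unfolding wf_graph_def edges_N_A_iff by auto
  qed
  ultimately show ?thesis unfolding wf_graph_def by simp
qed

lemma T1_ends_card: "t \<in> edges T1 \<Longrightarrow> card (ends T1 t) = 2"
proof (cases "t = t'")
  case True
  assume "t \<in> edges T1"
  then show ?thesis using True t'_in_T1_iff T1_ends_new by simp
next
  case False
  assume "t \<in> edges T1"
  then have "t \<in> edges_N_A" using False T1_edge_cases by blast
  then show ?thesis using edges_N_A_T1 T_ends_card edges_N_A_iff by simp
qed

lemma connected_T1: "connected T1"
  unfolding connected_def
proof (intro conjI ballI)
  show "verts T1 \<noteq> {}" using p1_N_A by auto
  fix u v assume "u \<in> verts T1" "v \<in> verts T1"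
  then have uv: "u \<in> N_A" "v \<in> N_A" by simp_all
  then obtain W where W: "walk T_cut u W v" using N_A_conn unfolding reachable_def by blast
  then have W_A: "set W \<subseteq> edges_N_A" using walk_T_cut_inside_N_A uv(1) by blast
  have "e \<in> edges T1 \<and> ends T1 e = ends T_cut e" if "e \<in> set W" for e
    using edges_N_A_T1[OF subsetD[OF W_A that]] by simp
  then have "walk T1 u W v" using walk_transfer[OF W, of T1] uv(2) by auto
  then show "reachable T1 u v" unfolding reachable_def by blast
qed

subsubsection \<open>Cycles of the reduced cactus\<close>

lemma vwalk_inside_N_A_or_N_B:
  assumes "vwalk T vs es" "set es \<inter> {a, b} = {}" "hd vs \<in> verts T"
  shows "set vs \<subseteq> N_A \<or> set vs \<subseteq> N_B"
proof -
  have "hd vs \<in> N_A \<or> hd vs \<in> N_B" using assms(3) unfolding verts_T by simp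
  then show ?thesis using vwalk_inside_side[OF assms(1,2)] by blast
qed

lemma vwalk_N_A_edges:
  assumes "vwalk T vs es" "set vs \<subseteq> N_A" "set es \<inter> {a, b} = {}"
  shows "set es \<subseteq> edges_N_A"
proof
  fix e assume e: "e \<in> set es"
  have "e \<in> edges T" using vwalk_edges[OF assms(1)] e by blast
  moreover have "ends T e \<subseteq> N_A" using vwalk_ends[OF assms(1) e] assms(2) by blast
  moreover have "e \<noteq> a" "e \<noteq> b" using assms(3) e by auto
  ultimately show "e \<in> edges_N_A" by (simp add: edges_N_A_iff)
qed

lemma vwalk_N_B_edges:
  assumes "vwalk T vs es" "set vs \<subseteq> N_B"
  shows "set es \<inter> edges_N_A = {}"
proof -
  have "ends T e \<subseteq> N_A \<inter> N_B" if "e \<in> set es" "e \<in> edges_N_A" for e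
    using vwalk_ends[OF assms(1) that(1)] assms(2) that(2) by (auto simp: edges_N_A_iff)
  moreover have "ends T e \<noteq> {}" if "e \<in> edges_N_A" for e
    using that wf_graph_ends(2)[OF wf_T] by (simp add: edges_N_A_iff)
  ultimately show ?thesis using N_A_N_B_disjoint by blast
qed

lemma cycle_T1_avoiding_t':
  assumes "is_cycle T1 C" "t' \<notin> set C"
  shows "is_cycle T C"
proof -
  have "e \<in> edges T \<and> ends T e = ends T1 e" if "e \<in> set C" for e
  proof -
    have "e \<in> edges_N_A"
      using T1_edge_cases is_cycle_edges[OF assms(1)] that assms(2) by blast
    then show ?thesis using edges_N_A_T1 by (simp add: edges_N_A_iff)
  qed
  then show ?thesis using is_cycle_transfer[OF assms(1)] by blast
qed

lemma cycle_T_inside_N_A: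
  assumes "is_cycle T C" "set C \<inter> {a, b} = {}" "t \<in> set C" "t \<in> edges_N_A"
  shows "is_cycle T1 C"
proof -
  obtain vs where vs: "vwalk T vs C" "C \<noteq> []" using assms(1) unfolding is_cycle_iff_vwalk by auto
  have "set vs \<subseteq> N_A \<or> set vs \<subseteq> N_B"
    using vwalk_inside_N_A_or_N_B[OF vs(1) assms(2) vwalk_start_in_verts[OF vs wf_T]] .
  moreover have "\<not> set vs \<subseteq> N_B" using vwalk_N_B_edges[OF vs(1)] assms(3,4) by blast
  ultimately have C_A: "set C \<subseteq> edges_N_A" using vwalk_N_A_edges[OF vs(1) _ assms(2)] by blast
  have "e \<in> edges T1 \<and> ends T1 e = ends T e" if "e \<in> set C" for e
    using edges_N_A_T1[OF subsetD[OF C_A that]] .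
  then show ?thesis using is_cycle_transfer[OF assms(1), of T1] by blast
qed

lemma cycle_T1_close:
  assumes "vwalk T vs es" "distinct vs" "set vs \<subseteq> N_A" "set es \<inter> {a, b} = {}" "es \<noteq> []"
    and "hd vs = p2" "last vs = p1"
  shows "p1 \<noteq> p2" "is_cycle T1 (es @ [t'])"
proof -
  have "length vs \<ge> 2" using vwalk_length[OF assms(1)] assms(5) by (cases es) auto
  then obtain v ws where vs: "vs = v # ws" "ws \<noteq> []" by (cases vs) (auto simp: Suc_le_eq)
  have "last ws \<in> set ws" using vs(2) by (rule last_in_set)
  then have "hd vs \<noteq> last vs" using assms(2) vs by auto
  then show "p1 \<noteq> p2" using assms(6,7) by simp
  have es_A: "set es \<subseteq> edges_N_A" using vwalk_N_A_edges assms(1,3,4) by blast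
  have "e \<in> edges T1 \<and> ends T1 e = ends T e" if "e \<in> set es" for e
    using edges_N_A_T1[OF subsetD[OF es_A that]] .
  then have "vwalk T1 vs es" using vwalk_transfer[OF assms(1), of T1] by blast
  moreover have "t' \<notin> set es" using es_A t'_notin_edges_N_A by blast
  moreover have "t' \<in> edges T1" using t'_in_T1_iff \<open>p1 \<noteq> p2\<close> by simp
  moreover have "ends T1 t' = {last vs, hd vs}"
    using T1_ends_new[OF \<open>p1 \<noteq> p2\<close>] assms(6,7) by simp
  ultimately show "is_cycle T1 (es @ [t'])" using is_cycle_close[OF _ assms(2,5)] by blast
qed

lemma vwalk_N_B_to_N_A_uses_b:
  assumes "vwalk T vs es" "hd vs \<in> N_B" "last vs \<in> N_A" "a \<notin> set es"
  shows "b \<in> set es"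
proof (rule ccontr)
  assume "b \<notin> set es"
  then have "set vs \<subseteq> N_B" using vwalk_inside_side[OF assms(1), of N_B] assms(2,4) by blast
  then have "last vs \<in> N_B" using last_in_set[OF vwalk_nonempty[OF assms(1)]] by blast
  then show False using assms(3) N_A_N_B_disjoint by blast
qed

lemma vwalk_N_B_to_N_A_crosses_b:
  assumes P: "vwalk T vs es" and "distinct vs" "hd vs \<in> N_B" "last vs \<in> N_A" "a \<notin> set es"
  obtains r1 r2 ws where "es = r1 @ b # r2" "set r1 \<inter> edges_N_A = {}" "vwalk T (p2 # ws) r2"
    "distinct (p2 # ws)" "set (p2 # ws) \<subseteq> N_A" "last (p2 # ws) = last vs" "set r2 \<inter> {a, b} = {}"
proof -
  have dist_es: "distinct es" using vwalk_distinct_edges P assms(2) by blast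
  have "b \<in> set es" using vwalk_N_B_to_N_A_uses_b[OF P assms(3-5)] .
  then obtain r1 r2 where es: "es = r1 @ b # r2" using split_list by metis
  then have r12: "set r1 \<inter> {a, b} = {}" "set r2 \<inter> {a, b} = {}" using dist_es assms(5) by auto
  define k where "k = length r1"
  have split: "vwalk T (take (Suc k) vs) r1" "vwalk T (drop k vs) (b # r2)"
    using vwalk_split[of T vs r1 "b # r2"] P es k_def by auto
  obtain z1 z2 ws where z: "drop k vs = z1 # z2 # ws" "ends T b = {z1, z2}" "vwalk T (z2 # ws) r2"
    using split(2) by (rule vwalk_ConsE)
  have k: "k < length vs" using vwalk_length[OF P] es k_def by simp
  moreover have "vs ! k = z1" using z(1) by (metis nth_via_drop)
  ultimately have "take (Suc k) vs = take k vs @ [z1]" by (simp add: take_Suc_conv_app_nth)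
  then have z1_in: "z1 \<in> set (take (Suc k) vs)" by simp
  have "hd (take (Suc k) vs) = hd vs" by simp
  then have B: "set (take (Suc k) vs) \<subseteq> N_B"
    using vwalk_inside_side[OF split(1) r12(1), of N_B] assms(3) by simp
  have dist_z: "distinct (z1 # z2 # ws)" using assms(2) z(1) by (metis distinct_drop)
  have "z1 \<in> N_B" using B z1_in by blast
  then have "z1 \<noteq> p2" using p2_N_A N_A_N_B_disjoint by blast
  then have "z2 = p2" using z(2) ends_b dist_z by (auto simp: doubleton_eq_iff)
  have "last (z2 # ws) = last (drop k vs)" using z(1) by simp
  also have "\<dots> = last vs" using k by (simp add: last_drop)
  finally have "last (z2 # ws) = last vs" .
  moreover have "set (z2 # ws) \<subseteq> N_A"
    using vwalk_inside_side[OF z(3) r12(2), of N_A] \<open>z2 = p2\<close> p2_N_A by simp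
  moreover have "set r1 \<inter> edges_N_A = {}" using vwalk_N_B_edges[OF split(1) B] .
  moreover have "distinct (z2 # ws)" using dist_z by simp
  ultimately show ?thesis using that[OF es] z(3) r12(2) \<open>z2 = p2\<close> by blast
qed

lemma edges_N_A_not_in_N_B:
  assumes "t \<in> edges_N_A"
  shows "\<not> ends T t \<subseteq> N_B"
proof
  assume "ends T t \<subseteq> N_B"
  moreover have "ends T t \<subseteq> N_A" "ends T t \<noteq> {}"
    using assms wf_graph_ends(2)[OF wf_T] by (simp_all add: edges_N_A_iff)
  ultimately show False using N_A_N_B_disjoint by blast
qed

text \<open>Opened at \<open>a\<close>, the cycle becomes a path from \<open>q1\<close> to \<open>p1\<close>; it crosses into the
  \<open>A\<close>-side at \<open>b\<close>, and its \<open>A\<close>-side part is closed by \<open>t'\<close>.\<close>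

lemma cycle_T_through_a:
  assumes C: "is_cycle T C" "a \<in> set C" and t: "t \<in> set C" "t \<in> edges_N_A"
  shows "p1 \<noteq> p2" "\<exists>C1. is_cycle T1 C1 \<and> t' \<in> set C1 \<and> set C \<inter> edges_N_A \<subseteq> set C1"
proof -
  have "ends T a = {q1, p1}" using ends_a by (simp add: insert_commute)
  then obtain vs es where P: "vwalk T vs es" "distinct vs" "set es = set C - {a}"
    "hd vs = q1" "last vs = p1"
    using is_cycle_open_oriented[OF C] by blast
  have "a \<notin> set es" using P(3) by blast
  moreover have "hd vs \<in> N_B" "last vs \<in> N_A" using P(4,5) q1_N_B p1_N_A by simp_all
  ultimately obtain r1 r2 ws where cross: "es = r1 @ b # r2" "set r1 \<inter> edges_N_A = {}"
    "vwalk T (p2 # ws) r2" "distinct (p2 # ws)" "set (p2 # ws) \<subseteq> N_A" "last (p2 # ws) = last vs"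
    "set r2 \<inter> {a, b} = {}"
    using vwalk_N_B_to_N_A_crosses_b[OF P(1,2)] by blast
  have C_A: "set C \<inter> edges_N_A \<subseteq> set r2"
  proof
    fix x assume x: "x \<in> set C \<inter> edges_N_A"
    then have "x \<noteq> a" "x \<noteq> b" by (simp_all add: edges_N_A_iff)
    moreover have "x \<notin> set r1" using x cross(2) by blast
    ultimately show "x \<in> set r2" using x P(3) cross(1) by auto
  qed
  then have "r2 \<noteq> []" using t by auto
  have "hd (p2 # ws) = p2" "last (p2 # ws) = p1" using cross(6) P(5) by simp_all
  note close = cycle_T1_close[OF cross(3,4,5,7) \<open>r2 \<noteq> []\<close> this]
  then show "p1 \<noteq> p2" by blast
  show "\<exists>C1. is_cycle T1 C1 \<and> t' \<in> set C1 \<and> set C \<inter> edges_N_A \<subseteq> set C1"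
    using close(2) C_A by (intro exI[of _ "r2 @ [t']"]) auto
qed

lemma cycle_T_through_N_A_path:
  assumes P: "vwalk T vs es" "distinct vs" "set vs \<subseteq> N_A" "set es \<subseteq> edges_N_A"
    and ends: "hd vs = p1" "last vs = p2"
  obtains C where "is_cycle T C" "set es \<subseteq> set C" "a \<in> set C" "b \<in> set C"
    "\<forall>e \<in> set C. e \<in> {a, b} \<or> e \<in> set es \<or> ends T e \<subseteq> N_B"
proof -
  obtain W where W: "walk T_cut q2 W q1"
    using N_B_conn[OF q2_N_B q1_N_B] unfolding reachable_def by blast
  obtain vsQ esQ where Q: "vwalk T_cut vsQ esQ" "distinct vsQ" "hd vsQ = q2" "last vsQ = q1"
    using walk_imp_path[OF W] by blast
  have QT: "vwalk T vsQ esQ" "set esQ \<inter> {a, b} = {}" using vwalk_del_edges[OF Q(1)] by auto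
  have QB: "set vsQ \<subseteq> N_B" using vwalk_inside_side[OF QT, of N_B] Q(3) q2_N_B by simp
  obtain rest where rest: "vsQ = q2 # rest" using Q(3) vwalk_nonempty[OF QT(1)] by (cases vsQ) auto
  have "vwalk T (p2 # vsQ) (b # esQ)" using rest QT(1) b_in_edges ends_b by simp
  then have PQ: "vwalk T (vs @ vsQ) (es @ b # esQ)"
    using vwalk_append[OF P(1)] ends(2) by fastforce
  have "set vs \<inter> set vsQ = {}" using P(3) QB N_A_N_B_disjoint by blast
  then have "distinct (vs @ vsQ)" using P(2) Q(2) by simp
  moreover have "a \<notin> set (es @ b # esQ)" using P(4) QT(2) a_neq_b by (auto simp: edges_N_A_iff)
  moreover have "ends T a = {last (vs @ vsQ), hd (vs @ vsQ)}"
    using ends_a ends vwalk_nonempty[OF P(1)] Q(4) rest by (simp add: insert_commute)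
  ultimately have "is_cycle T ((es @ b # esQ) @ [a])"
    using is_cycle_close[OF PQ] a_in_edges by simp
  moreover have "\<forall>e \<in> set esQ. ends T e \<subseteq> N_B" using vwalk_ends[OF QT(1)] QB by blast
  ultimately show ?thesis using that[of "(es @ b # esQ) @ [a]"] by auto
qed

lemma cycle_T1_through_t':
  assumes C1: "is_cycle T1 C1" "t' \<in> set C1"
  obtains C where "is_cycle T C" "set C1 - {t'} \<subseteq> set C" "a \<in> set C"
    "\<forall>e \<in> set C. e \<in> {a, b} \<or> e \<in> set C1 \<or> ends T e \<subseteq> N_B"
proof -
  have "t' \<in> edges T1" using is_cycle_edges[OF C1(1)] C1(2) by blast
  then have "ends T1 t' = {p1, p2}" using t'_in_T1_iff T1_ends_new by simp
  then obtain vs es where P: "vwalk T1 vs es" "distinct vs" "set es = set C1 - {t'}"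
    "hd vs = p1" "last vs = p2"
    by (rule is_cycle_open_oriented[OF C1])
  have es_A: "set es \<subseteq> edges_N_A"
  proof
    fix e assume "e \<in> set es"
    then have "e \<in> edges T1" "e \<noteq> t'" using vwalk_edges[OF P(1)] P(3) by auto
    then show "e \<in> edges_N_A" by (rule T1_edge_cases)
  qed
  have "e \<in> edges T \<and> ends T e = ends T1 e" if "e \<in> set es" for e
    using subsetD[OF es_A that] edges_N_A_T1[OF subsetD[OF es_A that]] by (simp add: edges_N_A_iff)
  then have PT: "vwalk T vs es" using vwalk_transfer[OF P(1), of T] by blast
  have "a \<notin> edges_N_A" "b \<notin> edges_N_A" by (simp_all add: edges_N_A_iff)
  then have "set es \<inter> {a, b} = {}" using es_A by blast
  then have "set vs \<subseteq> N_A" using vwalk_inside_side[OF PT, of N_A] P(4) p1_N_A by simp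
  then obtain C where C: "is_cycle T C" "set es \<subseteq> set C" "a \<in> set C"
    "\<forall>e \<in> set C. e \<in> {a, b} \<or> e \<in> set es \<or> ends T e \<subseteq> N_B"
    by (rule cycle_T_through_N_A_path[OF PT P(2) _ es_A P(4,5)])
  have "set C1 - {t'} \<subseteq> set C" using C(2) P(3) by simp
  moreover have "\<forall>e \<in> set C. e \<in> {a, b} \<or> e \<in> set C1 \<or> ends T e \<subseteq> N_B" using C(4) P(3) by auto
  ultimately show ?thesis using that C(1,3) by blast
qed

lemma cycles_T1_through_t'_subset:
  assumes "is_cycle T1 C1" "is_cycle T1 C2" "t' \<in> set C1" "t' \<in> set C2"
  shows "set C1 \<subseteq> set C2"
proof
  fix x assume x: "x \<in> set C1"
  obtain C where C: "is_cycle T C" "set C1 - {t'} \<subseteq> set C" "a \<in> set C"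
    "\<forall>e \<in> set C. e \<in> {a, b} \<or> e \<in> set C1 \<or> ends T e \<subseteq> N_B"
    by (rule cycle_T1_through_t'[OF assms(1,3)])
  obtain C' where C': "is_cycle T C'" "set C2 - {t'} \<subseteq> set C'" "a \<in> set C'"
    "\<forall>e \<in> set C'. e \<in> {a, b} \<or> e \<in> set C2 \<or> ends T e \<subseteq> N_B"
    by (rule cycle_T1_through_t'[OF assms(2,4)])
  have "set C = set C'" using T_cycles_unique[OF C(1) C'(1) C(3) C'(3)] .
  show "x \<in> set C2"
  proof (cases "x = t'")
    case False
    moreover have "x \<in> edges T1" using is_cycle_edges[OF assms(1)] x by blast
    ultimately have "x \<in> edges_N_A" using T1_edge_cases by blast
    then have "x \<notin> {a, b}" "\<not> ends T x \<subseteq> N_B"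
      using edges_N_A_not_in_N_B by (auto simp: edges_N_A_iff)
    moreover have "x \<in> set C'" using C(2) x False \<open>set C = set C'\<close> by blast
    ultimately show ?thesis using C'(4) by blast
  qed (use assms(4) in simp)
qed

lemma cycles_T1_through_t'_disjoint:
  assumes "is_cycle T1 C1" "is_cycle T1 C2" "t' \<in> set C1" "t' \<notin> set C2"
  shows "set C1 \<inter> set C2 = {}"
proof (rule ccontr)
  assume "set C1 \<inter> set C2 \<noteq> {}"
  then obtain e where e: "e \<in> set C1" "e \<in> set C2" by blast
  obtain C where C: "is_cycle T C" "set C1 - {t'} \<subseteq> set C" "a \<in> set C"
    "\<forall>e \<in> set C. e \<in> {a, b} \<or> e \<in> set C1 \<or> ends T e \<subseteq> N_B"
    by (rule cycle_T1_through_t'[OF assms(1,3)])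
  have C2: "is_cycle T C2" using cycle_T1_avoiding_t' assms(2,4) by blast
  have "e \<in> set C" using assms(4) e C(2) by blast
  then have "a \<in> set C2" using T_cycles_unique[OF C(1) C2 _ e(2)] C(3) by blast
  then have "a \<in> edges T1" using is_cycle_edges[OF assms(2)] by blast
  moreover have "a \<noteq> t'" using a_in_edges t'_fresh by blast
  ultimately have "a \<in> edges_N_A" by (rule T1_edge_cases)
  then show False by (simp add: edges_N_A_iff)
qed

lemma cactus_T1: "cactus T1"
  unfolding cactus_def
proof (intro conjI allI impI ballI)
  show "wf_graph T1" by (rule wf_T1)
  show "connected T1" by (rule connected_T1)
  show "card (ends T1 e) = 2" if "e \<in> edges T1" for e using that by (rule T1_ends_card)
  fix e C1 C2 assume "is_cycle T1 C1 \<and> is_cycle T1 C2 \<and> e \<in> set C1 \<and> e \<in> set C2"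
  then have C: "is_cycle T1 C1" "is_cycle T1 C2" "e \<in> set C1" "e \<in> set C2" by auto
  consider "t' \<in> set C1" "t' \<in> set C2" | "t' \<in> set C1 \<longleftrightarrow> t' \<notin> set C2" | "t' \<notin> set C1" "t' \<notin> set C2"
    by blast
  then show "set C1 = set C2"
  proof cases
    case 1
    then show ?thesis using cycles_T1_through_t'_subset C(1,2) by blast
  next
    case 2
    then show ?thesis using cycles_T1_through_t'_disjoint C by blast
  next
    case 3
    then show ?thesis
      using T_cycles_unique cycle_T1_avoiding_t' C by blast
  qed
qed

definition restore_T where "restore_T t = (if t = t' then a else t)"

lemma on_common_cycle_a_b: "on_common_cycle T a b"
  using two_edge_cut_iff_cycle[OF e1_external e2_external e1_neq_e2] cut by blast

lemma common_cycle_T1_imp_T: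
  assumes "on_common_cycle T1 \<alpha> \<beta>"
  shows "on_common_cycle T (restore_T \<alpha>) (restore_T \<beta>)"
proof -
  obtain C1 where C1: "is_cycle T1 C1" "\<alpha> \<in> set C1" "\<beta> \<in> set C1"
    using assms unfolding on_common_cycle_def by blast
  show ?thesis
  proof (cases "t' \<in> set C1")
    case False
    then have "is_cycle T C1" "\<alpha> \<noteq> t'" "\<beta> \<noteq> t'" using cycle_T1_avoiding_t' C1 by auto
    then show ?thesis using C1 unfolding on_common_cycle_def restore_T_def by auto
  next
    case True
    obtain C where C: "is_cycle T C" "set C1 - {t'} \<subseteq> set C" "a \<in> set C"
      "\<forall>e \<in> set C. e \<in> {a, b} \<or> e \<in> set C1 \<or> ends T e \<subseteq> N_B"
      by (rule cycle_T1_through_t'[OF C1(1) True])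
    have "restore_T \<alpha> \<in> set C" "restore_T \<beta> \<in> set C"
      using C(2,3) C1(2,3) by (auto simp: restore_T_def)
    then show ?thesis using C(1) unfolding on_common_cycle_def by blast
  qed
qed

lemma cycle_T_to_T1:
  assumes "is_cycle T C" "\<gamma> \<in> set C" "\<gamma> \<in> edges_N_A"
  obtains C1 where "is_cycle T1 C1" "set C \<inter> edges_N_A \<subseteq> set C1" "a \<in> set C \<Longrightarrow> t' \<in> set C1"
proof (cases "a \<in> set C")
  case True
  then show ?thesis using cycle_T_through_a(2)[OF assms(1) True assms(2,3)] that by blast
next
  case False
  have "b \<notin> set C"
  proof
    assume "b \<in> set C"
    obtain C0 where C0: "is_cycle T C0" "a \<in> set C0" "b \<in> set C0"
      using on_common_cycle_a_b unfolding on_common_cycle_def by blast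
    then have "set C0 = set C" using T_cycles_unique assms(1) \<open>b \<in> set C\<close> by blast
    then show False using False C0(2) by simp
  qed
  then have "is_cycle T1 C" using cycle_T_inside_N_A[OF assms(1) _ assms(2,3)] False by simp
  then show ?thesis using that False by blast
qed

lemma common_cycle_T_imp_T1:
  assumes "\<alpha> \<in> edges T1" "\<beta> \<in> edges T1" "\<alpha> \<noteq> \<beta>"
    and "on_common_cycle T (restore_T \<alpha>) (restore_T \<beta>)"
  shows "on_common_cycle T1 \<alpha> \<beta>"
proof -
  obtain C where C: "is_cycle T C" "restore_T \<alpha> \<in> set C" "restore_T \<beta> \<in> set C"
    using assms(4) unfolding on_common_cycle_def by blast
  have old: "\<delta> \<in> edges_N_A \<and> \<delta> \<in> set C" if "\<delta> \<in> {\<alpha>, \<beta>}" "\<delta> \<noteq> t'" for \<delta>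
    using that assms(1,2) C(2,3) T1_edge_cases by (auto simp: restore_T_def)
  obtain \<gamma> where "\<gamma> \<in> {\<alpha>, \<beta>}" "\<gamma> \<noteq> t'" using assms(3) by blast
  then obtain C1 where C1: "is_cycle T1 C1" "set C \<inter> edges_N_A \<subseteq> set C1" "a \<in> set C \<Longrightarrow> t' \<in> set C1"
    using cycle_T_to_T1[OF C(1)] old by blast
  have "\<delta> \<in> set C1" if "\<delta> \<in> {\<alpha>, \<beta>}" for \<delta>
  proof (cases "\<delta> = t'")
    case True
    then show ?thesis using that C(2,3) C1(3) by (auto simp: restore_T_def)
  next
    case False
    then show ?thesis using old[OF that] C1(2) by blast
  qed
  then show ?thesis using C1(1) unfolding on_common_cycle_def by blast
qed

abbreviation "external_A \<equiv> external_edges G \<phi> \<inter> edges_A"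

lemma external_edges_G1: "external_edges G1 \<phi> = external_A \<union> (if p1 = p2 then {} else {e'})"
proof -
  have "card {p1, p2} = 2 \<longleftrightarrow> p1 \<noteq> p2" by (cases "p1 = p2") simp_all
  then have new: "e' \<in> external_edges G1 \<phi> \<longleftrightarrow> p1 \<noteq> p2"
    using G1_ends_new unfolding external_edges_def G1_edges by simp
  have old: "e \<in> external_edges G1 \<phi> \<longleftrightarrow> e \<in> external_A" if "e \<noteq> e'" for e
    using that G1_ends[OF that] unfolding external_edges_def G1_edges by auto
  show ?thesis
  proof (rule set_eqI)
    fix e
    show "e \<in> external_edges G1 \<phi> \<longleftrightarrow> e \<in> external_A \<union> (if p1 = p2 then {} else {e'})"
    proof (cases "e = e'")
      case True
      then show ?thesis using new e'_notin_edges_A by auto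
    next
      case False
      then show ?thesis using old[OF False] by auto
    qed
  qed
qed

lemma psi_bij_external_A: "bij_betw \<psi> external_A edges_N_A"
proof -
  have inj: "inj_on \<psi> (external_edges G \<phi>)" using psi_bij by (rule bij_betw_imp_inj_on)
  have "\<psi> e \<in> edges_N_A" if e: "e \<in> external_A" for e
  proof -
    have "\<psi> e \<in> edges T" using psi_bij e unfolding bij_betw_def by blast
    moreover have "\<psi> e \<noteq> a" "\<psi> e \<noteq> b"
      using inj e e1_external e2_external unfolding inj_on_def by auto
    moreover have "ends T (\<psi> e) \<subseteq> N_A" using ends_psi e unfolding N_A_def by auto
    ultimately show ?thesis by (simp add: edges_N_A_iff)
  qed
  moreover have "t \<in> \<psi> ` external_A" if t: "t \<in> edges_N_A" for t
  proof -
    obtain e where e: "e \<in> external_edges G \<phi>" "t = \<psi> e"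
      using t psi_bij unfolding bij_betw_def edges_N_A_iff by auto
    then have "e \<in> edges G" "e \<notin> {e1, e2}"
      using t unfolding external_edges_def edges_N_A_iff by auto
    then have "ends G e \<subseteq> A \<or> ends G e \<subseteq> B" by (rule edge_inside_side)
    moreover have "\<not> ends T t \<subseteq> N_B" using t by (rule edges_N_A_not_in_N_B)
    ultimately have "ends G e \<subseteq> A" using ends_psi[OF e(1)] e(2) unfolding N_B_def by auto
    then show ?thesis using e \<open>e \<in> edges G\<close> \<open>e \<notin> {e1, e2}\<close> by blast
  qed
  ultimately show ?thesis using inj_on_subset[OF inj] unfolding bij_betw_def by blast
qed

abbreviation "\<psi>1 \<equiv> \<psi>(e' := t')"

lemma psi1_bij: "bij_betw \<psi>1 (external_edges G1 \<phi>) (edges T1)"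
proof -
  have bij_A: "bij_betw \<psi>1 external_A edges_N_A"
    using psi_bij_external_A e'_notin_edges_A by (subst bij_betw_cong[where g = \<psi>]) auto
  show ?thesis
  proof (cases "p1 = p2")
    case True
    then show ?thesis using bij_A unfolding external_edges_G1 T1_edges by simp
  next
    case False
    have "bij_betw \<psi>1 (insert e' external_A) (insert t' edges_N_A)"
      using bij_A e'_notin_edges_A t'_notin_edges_N_A
      by (simp add: bij_betw_def inj_on_insert)
    then show ?thesis using False unfolding external_edges_G1 T1_edges by simp
  qed
qed

lemma ends_psi1: "e \<in> external_edges G1 \<phi> \<Longrightarrow> ends T1 (\<psi>1 e) = \<phi> ` ends G1 e"
proof (cases "e = e'")
  case True
  assume "e \<in> external_edges G1 \<phi>"
  then have "p1 \<noteq> p2"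
    using True e'_notin_edges_A unfolding external_edges_G1 by (auto split: if_splits)
  then show ?thesis using True T1_ends_new G1_ends_new by simp
next
  case False
  assume "e \<in> external_edges G1 \<phi>"
  then have e: "e \<in> external_A" using False unfolding external_edges_G1 by (auto split: if_splits)
  then have "\<psi> e \<in> edges_N_A" using psi_bij_external_A unfolding bij_betw_def by blast
  then have "ends T1 (\<psi> e) = ends T (\<psi> e)" using edges_N_A_T1 by blast
  also have "\<dots> = \<phi> ` ends G e" using ends_psi e by blast
  finally show ?thesis using False G1_ends[OF False] by simp
qed

lemma restore_T_psi1: "e \<in> external_edges G1 \<phi> \<Longrightarrow> restore_T (\<psi>1 e) = \<psi> (restore e)"
proof (cases "e = e'")
  case False
  assume "e \<in> external_edges G1 \<phi>"
  then have "e \<in> external_A" using False unfolding external_edges_G1 by (auto split: if_splits)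
  then have "\<psi> e \<in> edges_N_A" using psi_bij_external_A unfolding bij_betw_def by blast
  then have "\<psi> e \<noteq> t'" using t'_notin_edges_N_A by blast
  then show ?thesis using False by (simp add: restore_T_def restore_def)
qed (simp add: restore_T_def restore_def)

lemma two_edge_cut_G1_iff_cycle:
  assumes e: "e \<in> external_edges G1 \<phi>" and f: "f \<in> external_edges G1 \<phi>" and "e \<noteq> f"
  shows "two_edge_cut G1 {e, f} \<longleftrightarrow> on_common_cycle T1 (\<psi>1 e) (\<psi>1 f)"
proof -
  have restore_ext: "restore x \<in> external_edges G \<phi>" if "x \<in> external_edges G1 \<phi>" for x
    using that e1_external unfolding external_edges_G1 restore_def by (auto split: if_splits)
  have G1: "e \<in> edges G1" "f \<in> edges G1" using e f unfolding external_edges_def by auto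
  have "restore e \<noteq> restore f" using restore_inj G1 \<open>e \<noteq> f\<close> by blast
  then have "two_edge_cut G1 {e, f} \<longleftrightarrow> on_common_cycle T (restore_T (\<psi>1 e)) (restore_T (\<psi>1 f))"
    using two_edge_cut_G1_iff[OF G1 \<open>e \<noteq> f\<close>]
      two_edge_cut_iff_cycle[OF restore_ext[OF e] restore_ext[OF f]]
      restore_T_psi1[OF e] restore_T_psi1[OF f] by simp
  moreover have "\<psi>1 e \<in> edges T1" "\<psi>1 f \<in> edges T1" "\<psi>1 e \<noteq> \<psi>1 f"
    using psi1_bij e f \<open>e \<noteq> f\<close> unfolding bij_betw_def inj_on_def by blast+
  ultimately show ?thesis using common_cycle_T1_imp_T common_cycle_T_imp_T1 by blast
qed

theorem cactus_rep_G1: "cactus_rep_2cuts G1 T1 \<phi> \<psi>1"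
  unfolding cactus_rep_2cuts_def
proof (intro conjI ballI impI)
  show "cactus T1" by (rule cactus_T1)
  show "\<phi> ` verts G1 = verts T1" unfolding G1_verts T1_verts by (simp add: N_A_def)
  show "bij_betw \<psi>1 (external_edges G1 \<phi>) (edges T1)" by (rule psi1_bij)
  show "\<phi> u = \<phi> v \<longleftrightarrow> lambda_ge G1 3 u v" if "u \<in> verts G1" "v \<in> verts G1" for u v
  proof -
    have "u \<in> A" "v \<in> A" using that by simp_all
    then show ?thesis using phi_eq_iff[of u v] lambda_ge_G1_iff[of u v 3] A_verts by auto
  qed
  show "ends T1 (\<psi>1 e) = \<phi> ` ends G1 e" if "e \<in> external_edges G1 \<phi>" for e
    using that by (rule ends_psi1)
  show "two_edge_cut G1 {e, f} \<longleftrightarrow> on_common_cycle T1 (\<psi>1 e) (\<psi>1 f)"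
    if "e \<in> external_edges G1 \<phi>" "f \<in> external_edges G1 \<phi>" "e \<noteq> f" for e f
    using that by (rule two_edge_cut_G1_iff_cycle)
qed

lemma cactus_rep_reduce:
  "\<exists>\<psi>'. cactus_rep_2cuts (reduce G e1 e2 A e')
     (reduce_noloop T (\<psi> e1) (\<psi> e2) (side_of T {\<psi> e1, \<psi> e2} (\<phi> ` A)) t') \<phi> \<psi>'"
  using cactus_rep_G1 unfolding N_A_def by blast

end

theorem lemma5:
  fixes G :: "('v, 'e) mgraph" and T :: "('n, 'f) mgraph"
    and \<phi> :: "'v \<Rightarrow> 'n" and \<psi> :: "'e \<Rightarrow> 'f"
    and e1 e2 e1' e2' :: 'e and a' b' :: 'f and A :: "'v set"
  assumes "wf_graph G" and "connected G" and "cubic G" and "bridgeless G"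
    and "\<exists>F. two_edge_cut G F"
    and "cactus_rep_2cuts G T \<phi> \<psi>"
    and "two_edge_cut G {e1, e2}"
    and "A \<in> components (del_edges G {e1, e2})"
    and "e1' \<notin> edges G" and "e2' \<notin> edges G"
    and "a' \<notin> edges T" and "b' \<notin> edges T"
  shows "(\<exists>\<psi>1. cactus_rep_2cuts (reduce G e1 e2 A e1')
             (reduce_noloop T (\<psi> e1) (\<psi> e2) (side_of T {\<psi> e1, \<psi> e2} (\<phi> ` A)) a') \<phi> \<psi>1)
       \<and> (\<exists>\<psi>2. cactus_rep_2cuts (reduce G e1 e2 (verts G - A) e2')
             (reduce_noloop T (\<psi> e1) (\<psi> e2) (side_of T {\<psi> e1, \<psi> e2} (\<phi> ` (verts G - A))) b') \<phi> \<psi>2)"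
proof -
  obtain x1 y1 x2 y2 where side: "two_cut_side G e1 e2 A x1 y1 x2 y2"
    using two_cut_side_exists[OF assms(1,2,4,7,8)] .
  have side1: "cactus_reduction G e1 e2 A x1 y1 x2 y2 e1' T \<phi> \<psi> a'"
    using side assms(6,9,11)
    by (intro cactus_reduction.intro graph_reduction.intro graph_reduction_axioms.intro
        cactus_reduction_axioms.intro)
  have side2: "cactus_reduction G e1 e2 (verts G - A) y1 x1 y2 x2 e2' T \<phi> \<psi> b'"
    using two_cut_side.two_cut_side_complement[OF side] assms(6,10,12)
    by (intro cactus_reduction.intro graph_reduction.intro graph_reduction_axioms.intro
        cactus_reduction_axioms.intro)
  show ?thesis
    using cactus_reduction.cactus_rep_reduce[OF side1] cactus_reduction.cactus_rep_reduce[OF side2]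
    by blast
qed

end
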